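(* Let $q\geq4$ be an even integer, $n=q^2-1$, and let $A_0=I,A_1,A_2,A_3$ be the adjacency matrices of a symmetric 3-class association scheme on $n$ points with first eigenmatrix \[ P=\begin{bmatrix}1&\frac{q^2}{2}-q&\frac{q^2}{2}&q-2\\ 1&\frac q2&-\frac q2&-1\\ 1&-\frac q2+1&-\frac q2&q-2\\ 1&-\frac q2&\frac q2&-1\end{bmatrix}. \] For $m=1,\dots,6$ let $W_m=A_0+w_1A_1+w_2A_2+w_3A_3$ where $(w_1,w_2,w_3)$ (nonzero complex numbers) satisfies condition $(m)$ of the following list (so that each $W_m$ is a type-II matrix): (1) $w_1=w_2=w_3$ and $w_3+\frac1{w_3}+q^2-3=0$; (2) $w_3+\frac1{w_3}+q^2-3=0$ and $w_1=w_2=\frac{-(q-3)w_3+(q-1)}{q^2-2q-1}$; (3) $w_1+\frac1{w_1}=\frac{2(q^2-6)}{q^2-4}$, $w_2=-1$, $w_3=w_1$; (4) $w_1=w_3=1$ and $w_2+\frac1{w_2}=\frac{-2(q^2-2)}{q^2}$; (5) $w_1+\frac1{w_1}=-\frac2q$, $w_2=\frac1{w_1}$, $w_3=1$; (6) for a real number $r$ with $r^2=(17q-1)(q-1)$, with $a_{0,1}=\frac{-(q-1)(q-2)+(q+2)r}{2q(q+1)}$, $a_{0,2}=\frac{(q+2)(q-1)-(q-2)r}{2q(q-3)}$, $a_{0,3}=\frac{5q^2-2q-19-(q-1)r}{2(q+1)(q-3)}$, $a_{1,2}=\frac{2(-q^4+2q^3+4q^2-10q+1+(q-1)r)}{q^2(q+1)(q-3)}$,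 $a_{1,3}=-a_{0,2}$: $w_1+\frac1{w_1}=a_{0,1}$ and $w_i=\frac{w_1^2-1}{a_{1,i}w_1-a_{0,i}}$ for $i=2,3$. Then $W_1,\dots,W_6$ are pairwise inequivalent.
   Context: A symmetric association scheme with adjacency matrices $A_0=I,\dots,A_d$: symmetric $(0,1)$-matrices summing to $J$ whose span is closed under multiplication; with primitive idempotents $E_0=\frac1nJ,\dots,E_d$, the first eigenmatrix is defined by $A_j=\sum_iP_{i,j}E_i$. A type-II matrix is an $n\times n$ matrix $W$ with nonzero complex entries and $W(W^{(-)})^\top=nI$, $W^{(-)}$ the entrywise inverse. Two type-II matrices $W_1,W_2$ are equivalent if there exist invertible diagonal matrices $D,D'$ and permutation matrices $T,T'$ with $DW_1D'=TW_2T'$. *)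

theory Defs
  imports "Jordan_Normal_Form.Matrix" "HOL-Combinatorics.Permutations"
begin

definition all_ones :: "nat \<Rightarrow> complex mat" where
  "all_ones n = mat n n (\<lambda>_. 1)"

definition msum :: "nat \<Rightarrow> (nat \<Rightarrow> complex mat) \<Rightarrow> nat set \<Rightarrow> complex mat" where
  "msum n M I = mat n n (\<lambda>(a,b). \<Sum>i\<in>I. M i $$ (a,b))"

definition in_span :: "nat \<Rightarrow> nat \<Rightarrow> (nat \<Rightarrow> complex mat) \<Rightarrow> complex mat \<Rightarrow> bool" where
  "in_span n d A X \<longleftrightarrow> (\<exists>c. X = msum n (\<lambda>k. c k \<cdot>\<^sub>m A k) {..d})"

definition sym_assoc_scheme :: "nat \<Rightarrow> nat \<Rightarrow> (nat \<Rightarrow> complex mat) \<Rightarrow> bool" where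
  "sym_assoc_scheme n d A \<longleftrightarrow>
     (\<forall>i\<le>d. A i \<in> carrier_mat n n \<and> transpose_mat (A i) = A i \<and> A i \<noteq> 0\<^sub>m n n
            \<and> (\<forall>a<n. \<forall>b<n. A i $$ (a,b) \<in> {0,1})) \<and>
     A 0 = 1\<^sub>m n \<and>
     msum n A {..d} = all_ones n \<and>
     (\<forall>i\<le>d. \<forall>j\<le>d. in_span n d A (A i * A j))"

definition first_eigenmatrix :: "nat \<Rightarrow> nat \<Rightarrow> (nat \<Rightarrow> complex mat) \<Rightarrow> (nat \<Rightarrow> nat \<Rightarrow> complex) \<Rightarrow> bool" where
  "first_eigenmatrix n d A P \<longleftrightarrow>
     (\<exists>E. E 0 = (1 / of_nat n) \<cdot>\<^sub>m all_ones n \<and>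
          (\<forall>i\<le>d. E i \<in> carrier_mat n n \<and> E i \<noteq> 0\<^sub>m n n \<and> in_span n d A (E i) \<and>
                 (\<forall>j\<le>d. E i * E j = (if i = j then E i else 0\<^sub>m n n))) \<and>
          msum n E {..d} = 1\<^sub>m n \<and>
          (\<forall>j\<le>d. A j = msum n (\<lambda>i. P i j \<cdot>\<^sub>m E i) {..d}))"

definition type_II :: "nat \<Rightarrow> complex mat \<Rightarrow> bool" where
  "type_II n W \<longleftrightarrow> W \<in> carrier_mat n n \<and> (\<forall>a<n. \<forall>b<n. W $$ (a,b) \<noteq> 0) \<and>
     W * transpose_mat (mat n n (\<lambda>(a,b). 1 / W $$ (a,b))) = of_nat n \<cdot>\<^sub>m 1\<^sub>m n"

definition invertible_diag :: "nat \<Rightarrow> complex mat \<Rightarrow> bool" where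
  "invertible_diag n D \<longleftrightarrow> D \<in> carrier_mat n n \<and> diagonal_mat D \<and> invertible_mat D"

definition perm_matrix :: "nat \<Rightarrow> complex mat \<Rightarrow> bool" where
  "perm_matrix n T \<longleftrightarrow> (\<exists>\<sigma>. \<sigma> permutes {..<n} \<and> T = mat n n (\<lambda>(i,j). if \<sigma> i = j then 1 else 0))"

definition typeII_equiv :: "nat \<Rightarrow> complex mat \<Rightarrow> complex mat \<Rightarrow> bool" where
  "typeII_equiv n W1 W2 \<longleftrightarrow>
     (\<exists>D D' T T'. invertible_diag n D \<and> invertible_diag n D' \<and> perm_matrix n T \<and> perm_matrix n T' \<and>
        D * W1 * D' = T * W2 * T')"

definition P_q :: "nat \<Rightarrow> nat \<Rightarrow> nat \<Rightarrow> complex" where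
  "P_q q i j = (let x = (of_nat q :: complex) in
     [[1, x^2/2 - x, x^2/2, x - 2],
      [1, x/2, -x/2, -1],
      [1, -x/2 + 1, -x/2, x - 2],
      [1, -x/2, x/2, -1]] ! i ! j)"

definition W_of :: "nat \<Rightarrow> (nat \<Rightarrow> complex mat) \<Rightarrow> complex \<Rightarrow> complex \<Rightarrow> complex \<Rightarrow> complex mat" where
  "W_of n A w1 w2 w3 = A 0 + w1 \<cdot>\<^sub>m A 1 + w2 \<cdot>\<^sub>m A 2 + w3 \<cdot>\<^sub>m A 3"

definition a01 :: "nat \<Rightarrow> real \<Rightarrow> complex" where
  "a01 q r = (let x = of_nat q; s = complex_of_real r in (-(x-1)*(x-2) + (x+2)*s) / (2*x*(x+1)))"
definition a02 :: "nat \<Rightarrow> real \<Rightarrow> complex" where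
  "a02 q r = (let x = of_nat q; s = complex_of_real r in ((x+2)*(x-1) - (x-2)*s) / (2*x*(x-3)))"
definition a03 :: "nat \<Rightarrow> real \<Rightarrow> complex" where
  "a03 q r = (let x = of_nat q; s = complex_of_real r in (5*x^2 - 2*x - 19 - (x-1)*s) / (2*(x+1)*(x-3)))"
definition a12 :: "nat \<Rightarrow> real \<Rightarrow> complex" where
  "a12 q r = (let x = of_nat q; s = complex_of_real r in
     2*(-(x^4) + 2*x^3 + 4*x^2 - 10*x + 1 + (x-1)*s) / (x^2*(x+1)*(x-3)))"
definition a13 :: "nat \<Rightarrow> real \<Rightarrow> complex" where
  "a13 q r = - a02 q r"

end

theory Submission
  imports Defs
begin

(* Equivalence rescales and permutes the rows and columns of a type-II matrix, so the set of its
   cross ratios W(a,x) W(b,y) / (W(a,y) W(b,x)) is an invariant. For W = A0 + w1 A1 + w2 A2 + w3 A3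
   every cross ratio is a quotient wi wj / (wk wl) of weights (with w0 = 1); conversely it contains
   each wk^2 and, because relation 1 contains triangles (its intersection number (q/2 - 1)^2 is read
   off the eigenmatrix), also 1 / w1. For each pair of the six matrices one of them has a cross ratio
   z which is no weight quotient of the other: either z is not real while the other matrix is real,
   or the weights of the other matrix are, up to sign, powers of one number u, so that each weight
   quotient has z + 1/z = +-D(u + 1/u) for a Dickson polynomial D of degree at most 4, and estimates
   in q rule out these finitely many values. *)

section \<open>Cross ratios of type-II matrices\<close>

definition cross_ratio :: "complex mat \<Rightarrow> nat \<Rightarrow> nat \<Rightarrow> nat \<Rightarrow> nat \<Rightarrow> complex" where
  "cross_ratio W a b x y = W $$ (a,x) * W $$ (b,y) / (W $$ (a,y) * W $$ (b,x))"

definition cross_ratios :: "nat \<Rightarrow> complex mat \<Rightarrow> complex set" where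
  "cross_ratios n W = {cross_ratio W a b x y | a b x y. a < n \<and> b < n \<and> x < n \<and> y < n}"

lemma index_mult_diagonal_left:
  fixes M :: "'a::semiring_1 mat"
  assumes D: "D \<in> carrier_mat n n" "diagonal_mat D" and M: "M \<in> carrier_mat n m"
    and ij: "i < n" "j < m"
  shows "(D * M) $$ (i,j) = D $$ (i,i) * M $$ (i,j)"
proof -
  have "(D * M) $$ (i,j) = (\<Sum>k\<in>{0..<n}. D $$ (i,k) * M $$ (k,j))"
    using D M ij by (simp add: scalar_prod_def)
  also have "\<dots> = (\<Sum>k\<in>{0..<n}. if k = i then D $$ (i,i) * M $$ (i,j) else 0)"
    using D ij by (intro sum.cong) (auto simp: diagonal_mat_def)
  finally show ?thesis using ij by simp
qed

lemma index_mult_diagonal_right: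
  fixes M :: "'a::semiring_1 mat"
  assumes D: "D \<in> carrier_mat m m" "diagonal_mat D" and M: "M \<in> carrier_mat n m"
    and ij: "i < n" "j < m"
  shows "(M * D) $$ (i,j) = M $$ (i,j) * D $$ (j,j)"
proof -
  have "(M * D) $$ (i,j) = (\<Sum>k\<in>{0..<m}. M $$ (i,k) * D $$ (k,j))"
    using D M ij by (simp add: scalar_prod_def)
  also have "\<dots> = (\<Sum>k\<in>{0..<m}. if k = j then M $$ (i,j) * D $$ (j,j) else 0)"
    using D ij by (intro sum.cong) (auto simp: diagonal_mat_def)
  finally show ?thesis using ij by simp
qed

lemma index_mult_perm_left:
  fixes M :: "'a::semiring_1 mat"
  assumes \<sigma>: "\<sigma> permutes {..<n}" and M: "M \<in> carrier_mat n m" and ij: "i < n" "j < m"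
  shows "(mat n n (\<lambda>(i,j). if \<sigma> i = j then 1 else 0) * M) $$ (i,j) = M $$ (\<sigma> i, j)"
proof -
  have "(mat n n (\<lambda>(i,j). if \<sigma> i = j then 1 else 0) * M) $$ (i,j)
      = (\<Sum>k\<in>{0..<n}. (if \<sigma> i = k then 1 else 0) * M $$ (k,j))"
    using M ij by (simp add: scalar_prod_def)
  also have "\<dots> = (\<Sum>k\<in>{0..<n}. if \<sigma> i = k then M $$ (k,j) else 0)"
    by (intro sum.cong) simp_all
  finally show ?thesis using permutes_in_image[OF \<sigma>] ij by (simp add: sum.delta)
qed

lemma index_mult_perm_right:
  fixes M :: "'a::semiring_1 mat"
  assumes \<sigma>: "\<sigma> permutes {..<m}" and M: "M \<in> carrier_mat n m" and ij: "i < n" "j < m"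
  shows "(M * mat m m (\<lambda>(i,j). if \<sigma> i = j then 1 else 0)) $$ (i,j) = M $$ (i, inv_into UNIV \<sigma> j)"
proof -
  have "(M * mat m m (\<lambda>(i,j). if \<sigma> i = j then 1 else 0)) $$ (i,j)
      = (\<Sum>k\<in>{0..<m}. M $$ (i,k) * (if \<sigma> k = j then 1 else 0))"
    using M ij by (simp add: scalar_prod_def)
  also have "\<dots> = (\<Sum>k\<in>{0..<m}. if inv_into UNIV \<sigma> j = k then M $$ (i,k) else 0)"
    by (intro sum.cong) (auto simp: permutes_inv_eq[OF \<sigma>])
  finally show ?thesis
    using permutes_in_image[OF permutes_inv[OF \<sigma>]] ij by (simp add: sum.delta)
qed

lemma typeII_equiv_entrywise:
  assumes W1: "W1 \<in> carrier_mat n n" and W2: "W2 \<in> carrier_mat n n"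
    and eq: "typeII_equiv n W1 W2"
  obtains d d' \<sigma> \<tau> where "\<sigma> permutes {..<n}" "\<tau> permutes {..<n}"
    "\<And>a x. a < n \<Longrightarrow> x < n \<Longrightarrow> d a * W1 $$ (a,x) * d' x = W2 $$ (\<sigma> a, \<tau> x)"
proof -
  obtain D D' T T' where D: "invertible_diag n D" and D': "invertible_diag n D'"
    and T: "perm_matrix n T" and T': "perm_matrix n T'" and DWD: "D * W1 * D' = T * W2 * T'"
    using eq unfolding typeII_equiv_def by blast
  obtain \<sigma> where \<sigma>: "\<sigma> permutes {..<n}" "T = mat n n (\<lambda>(i,j). if \<sigma> i = j then 1 else 0)"
    using T unfolding perm_matrix_def by blast
  obtain \<tau> where \<tau>: "\<tau> permutes {..<n}" "T' = mat n n (\<lambda>(i,j). if \<tau> i = j then 1 else 0)"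
    using T' unfolding perm_matrix_def by blast
  have Dc: "D \<in> carrier_mat n n" "diagonal_mat D" and D'c: "D' \<in> carrier_mat n n" "diagonal_mat D'"
    using D D' unfolding invertible_diag_def by auto
  have TW: "T * W2 \<in> carrier_mat n n" using \<sigma>(2) W2 by (auto intro!: mult_carrier_mat)
  have entry: "D $$ (a,a) * W1 $$ (a,x) * D' $$ (x,x) = W2 $$ (\<sigma> a, inv_into UNIV \<tau> x)"
    if ax: "a < n" "x < n" for a x
  proof -
    have "D $$ (a,a) * W1 $$ (a,x) * D' $$ (x,x) = (D * W1 * D') $$ (a,x)"
      using index_mult_diagonal_right[OF D'c _ ax] index_mult_diagonal_left[OF Dc W1 ax] Dc W1
      by simp
    also have "\<dots> = (T * W2) $$ (a, inv_into UNIV \<tau> x)"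
      unfolding DWD using index_mult_perm_right[OF \<tau>(1) TW ax] \<tau>(2) by simp
    also have "\<dots> = W2 $$ (\<sigma> a, inv_into UNIV \<tau> x)"
      unfolding \<sigma>(2) using index_mult_perm_left[OF \<sigma>(1) W2 ax(1)]
        permutes_in_image[OF permutes_inv[OF \<tau>(1)]] ax by simp
    finally show ?thesis .
  qed
  show ?thesis by (rule that[OF \<sigma>(1) permutes_inv[OF \<tau>(1)] entry])
qed

lemma cross_ratio_rescale:
  fixes d d' :: "nat \<Rightarrow> complex"
  assumes nz: "d a \<noteq> 0" "d b \<noteq> 0" "d' x \<noteq> 0" "d' y \<noteq> 0"
    and W: "\<And>u v. u \<in> {a,b} \<Longrightarrow> v \<in> {x,y} \<Longrightarrow> W' $$ (\<sigma> u, \<tau> v) = d u * W $$ (u,v) * d' v"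
  shows "cross_ratio W' (\<sigma> a) (\<sigma> b) (\<tau> x) (\<tau> y) = cross_ratio W a b x y"
  unfolding cross_ratio_def using nz by (simp add: W field_simps)

lemma cross_ratios_typeII_equiv:
  assumes W1: "W1 \<in> carrier_mat n n" and W2: "W2 \<in> carrier_mat n n"
    and nz: "\<forall>a<n. \<forall>b<n. W2 $$ (a,b) \<noteq> 0"
    and eq: "typeII_equiv n W1 W2"
  shows "cross_ratios n W1 = cross_ratios n W2"
proof -
  obtain d d' \<sigma> \<tau> where \<sigma>: "\<sigma> permutes {..<n}" and \<tau>: "\<tau> permutes {..<n}"
    and e: "\<And>a x. a < n \<Longrightarrow> x < n \<Longrightarrow> d a * W1 $$ (a,x) * d' x = W2 $$ (\<sigma> a, \<tau> x)"
    using typeII_equiv_entrywise[OF W1 W2 eq] by metis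
  have \<sigma>n: "\<sigma> a < n" "inv_into UNIV \<sigma> a < n" and \<tau>n: "\<tau> a < n" "inv_into UNIV \<tau> a < n"
    if "a < n" for a
    using that permutes_in_image[OF \<sigma>] permutes_in_image[OF \<tau>]
      permutes_in_image[OF permutes_inv[OF \<sigma>]] permutes_in_image[OF permutes_inv[OF \<tau>]] by auto
  have "d a * W1 $$ (a,x) * d' x \<noteq> 0" if "a < n" "x < n" for a x
    using e[OF that] nz \<sigma>n(1)[OF that(1)] \<tau>n(1)[OF that(2)] by simp
  then have nz1: "d a \<noteq> 0" "d' x \<noteq> 0" if "a < n" "x < n" for a x
    using that by auto
  have key: "cross_ratio W2 (\<sigma> a) (\<sigma> b) (\<tau> x) (\<tau> y) = cross_ratio W1 a b x y"
    if h: "a < n" "b < n" "x < n" "y < n" for a b x y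
    using h by (intro cross_ratio_rescale[where d = d and d' = d'] nz1) (auto simp: e)
  show ?thesis
  proof (intro equalityI subsetI)
    fix z assume "z \<in> cross_ratios n W1"
    then obtain a b x y where h: "a < n" "b < n" "x < n" "y < n" "z = cross_ratio W1 a b x y"
      unfolding cross_ratios_def by blast
    then have "z = cross_ratio W2 (\<sigma> a) (\<sigma> b) (\<tau> x) (\<tau> y)" using key by simp
    then show "z \<in> cross_ratios n W2" unfolding cross_ratios_def using \<sigma>n \<tau>n h by blast
  next
    fix z assume "z \<in> cross_ratios n W2"
    then obtain a b x y where h: "a < n" "b < n" "x < n" "y < n" "z = cross_ratio W2 a b x y"
      unfolding cross_ratios_def by blast
    then have "z = cross_ratio W1 (inv_into UNIV \<sigma> a) (inv_into UNIV \<sigma> b)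
        (inv_into UNIV \<tau> x) (inv_into UNIV \<tau> y)"
      using key[OF \<sigma>n(2)[OF h(1)] \<sigma>n(2)[OF h(2)] \<tau>n(2)[OF h(3)] \<tau>n(2)[OF h(4)]]
      by (simp add: permutes_inverses[OF \<sigma>] permutes_inverses[OF \<tau>])
    then show "z \<in> cross_ratios n W1" unfolding cross_ratios_def using \<sigma>n \<tau>n h by blast
  qed
qed

definition typeII_inequiv :: "nat \<Rightarrow> complex mat \<Rightarrow> complex mat \<Rightarrow> bool" where
  "typeII_inequiv n W W' \<longleftrightarrow> \<not> typeII_equiv n W W' \<and> \<not> typeII_equiv n W' W"

lemma typeII_inequiv_commute: "typeII_inequiv n W W' \<longleftrightarrow> typeII_inequiv n W' W"
  unfolding typeII_inequiv_def by blast

lemma typeII_inequiv_if_cross_ratio: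
  assumes W: "W \<in> carrier_mat n n" "\<forall>a<n. \<forall>b<n. W $$ (a,b) \<noteq> 0"
    and W': "W' \<in> carrier_mat n n" "\<forall>a<n. \<forall>b<n. W' $$ (a,b) \<noteq> 0"
    and z: "z \<in> cross_ratios n W" "z \<notin> cross_ratios n W'"
  shows "typeII_inequiv n W W'"
  unfolding typeII_inequiv_def
  using cross_ratios_typeII_equiv[OF W(1) W'(1) W'(2)] cross_ratios_typeII_equiv[OF W'(1) W(1) W(2)] z
  by auto

section \<open>Symmetric association schemes\<close>

lemma sym_assoc_scheme_carrier:
  assumes "sym_assoc_scheme n d A" "k \<le> d"
  shows "A k \<in> carrier_mat n n"
  using assms unfolding sym_assoc_scheme_def by auto

lemma sym_assoc_scheme_entry_01:
  assumes "sym_assoc_scheme n d A" "k \<le> d" "a < n" "b < n"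
  shows "A k $$ (a,b) \<in> {0,1}"
  using assms unfolding sym_assoc_scheme_def by auto

lemma sym_assoc_scheme_symmetric:
  assumes S: "sym_assoc_scheme n d A" and k: "k \<le> d" and ab: "a < n" "b < n"
  shows "A k $$ (b,a) = A k $$ (a,b)"
proof -
  have "transpose_mat (A k) $$ (a,b) = A k $$ (a,b)" using S k unfolding sym_assoc_scheme_def by simp
  then show ?thesis using sym_assoc_scheme_carrier[OF S k] ab by simp
qed

lemma sym_assoc_scheme_diagonal:
  assumes "sym_assoc_scheme n d A" "a < n"
  shows "A 0 $$ (a,a) = 1"
  using assms unfolding sym_assoc_scheme_def by auto

lemma sym_assoc_scheme_relation_nonempty:
  assumes S: "sym_assoc_scheme n d A" and k: "k \<le> d"
  obtains a b where "a < n" "b < n" "A k $$ (a,b) = 1"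
proof -
  have "\<exists>a<n. \<exists>b<n. A k $$ (a,b) = 1"
  proof (rule ccontr)
    assume "\<not> ?thesis"
    then have "A k = 0\<^sub>m n n"
      using sym_assoc_scheme_carrier[OF S k] sym_assoc_scheme_entry_01[OF S k] by (intro eq_matI) auto
    with S k show False unfolding sym_assoc_scheme_def by simp
  qed
  then show ?thesis using that by blast
qed

lemma sym_assoc_scheme_unique_relation:
  assumes S: "sym_assoc_scheme n d A" and ab: "a < n" "b < n"
  obtains k where "k \<le> d" "A k $$ (a,b) = 1" "\<And>j. j \<le> d \<Longrightarrow> j \<noteq> k \<Longrightarrow> A j $$ (a,b) = 0"
proof -
  define K where "K = {..d} \<inter> {k. A k $$ (a,b) = 1}"
  have "(1::complex) = msum n A {..d} $$ (a,b)"
    using S ab unfolding sym_assoc_scheme_def by (simp add: all_ones_def)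
  also have "\<dots> = (\<Sum>k\<le>d. A k $$ (a,b))" unfolding msum_def using ab by simp
  also have "\<dots> = (\<Sum>k\<le>d. of_bool (A k $$ (a,b) = 1))"
    using sym_assoc_scheme_entry_01[OF S _ ab] by (intro sum.cong refl) force
  also have "\<dots> = of_nat (card K)" unfolding K_def by simp
  finally have "card K = 1" by (metis of_nat_1 of_nat_eq_iff)
  then obtain k where K: "K = {k}" by (rule card_1_singletonE)
  show ?thesis
  proof (rule that)
    show "k \<le> d" "A k $$ (a,b) = 1" using K unfolding K_def by auto
    show "A j $$ (a,b) = 0" if "j \<le> d" "j \<noteq> k" for j
      using K that sym_assoc_scheme_entry_01[OF S that(1) ab] unfolding K_def by auto
  qed
qed

lemma first_eigenmatrixE:
  assumes "first_eigenmatrix n d A P"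
  obtains E where "\<And>i. i \<le> d \<Longrightarrow> E i \<in> carrier_mat n n" "\<And>i. i \<le> d \<Longrightarrow> E i \<noteq> 0\<^sub>m n n"
    "\<And>i j. i \<le> d \<Longrightarrow> j \<le> d \<Longrightarrow> E i * E j = (if i = j then E i else 0\<^sub>m n n)"
    "\<And>j. j \<le> d \<Longrightarrow> A j = msum n (\<lambda>i. P i j \<cdot>\<^sub>m E i) {..d}"
proof -
  from assms obtain E where
    "\<forall>i\<le>d. E i \<in> carrier_mat n n \<and> E i \<noteq> 0\<^sub>m n n \<and> in_span n d A (E i) \<and>
       (\<forall>j\<le>d. E i * E j = (if i = j then E i else 0\<^sub>m n n))"
    "\<forall>j\<le>d. A j = msum n (\<lambda>i. P i j \<cdot>\<^sub>m E i) {..d}"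
    unfolding first_eigenmatrix_def by blast
  then show ?thesis using that by blast
qed

lemma index_msum_smult_mult:
  assumes M: "\<And>i. i \<in> I \<Longrightarrow> M i \<in> carrier_mat n n" and X: "X \<in> carrier_mat n m"
    and I: "finite I" and ab: "a < n" "b < m"
  shows "(msum n (\<lambda>i. f i \<cdot>\<^sub>m M i) I * X) $$ (a,b) = (\<Sum>i\<in>I. f i * (M i * X) $$ (a,b))"
proof -
  have "(msum n (\<lambda>i. f i \<cdot>\<^sub>m M i) I * X) $$ (a,b)
      = (\<Sum>k\<in>{0..<n}. (\<Sum>i\<in>I. f i * M i $$ (a,k)) * X $$ (k,b))"
  proof -
    have "(f i \<cdot>\<^sub>m M i) $$ (a,k) = f i * M i $$ (a,k)" if "i \<in> I" "k < n" for i k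
      using M[OF that(1)] ab that(2) by simp
    then show ?thesis using X ab by (auto simp: msum_def scalar_prod_def intro!: sum.cong)
  qed
  also have "\<dots> = (\<Sum>i\<in>I. \<Sum>k\<in>{0..<n}. f i * (M i $$ (a,k) * X $$ (k,b)))"
    by (simp add: sum_distrib_right mult.assoc sum.swap[of _ I])
  also have "\<dots> = (\<Sum>i\<in>I. f i * (M i * X) $$ (a,b))"
  proof (intro sum.cong refl)
    fix i assume "i \<in> I"
    then have "M i \<in> carrier_mat n n" by (rule M)
    then show "(\<Sum>k\<in>{0..<n}. f i * (M i $$ (a,k) * X $$ (k,b))) = f i * (M i * X) $$ (a,b)"
      using X ab by (simp add: scalar_prod_def sum_distrib_left)
  qed
  finally show ?thesis .
qed

lemma first_eigenmatrix_mult: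
  assumes F: "first_eigenmatrix n d A P" and ijl: "i \<le> d" "j \<le> d" "l \<le> d"
    and c: "A i * A j = msum n (\<lambda>k. c k \<cdot>\<^sub>m A k) {..d}"
  shows "P l i * P l j = (\<Sum>k\<le>d. c k * P l k)"
proof -
  obtain E where Ec: "\<And>i. i \<le> d \<Longrightarrow> E i \<in> carrier_mat n n" and Enz: "\<And>i. i \<le> d \<Longrightarrow> E i \<noteq> 0\<^sub>m n n"
    and Eorth: "\<And>i j. i \<le> d \<Longrightarrow> j \<le> d \<Longrightarrow> E i * E j = (if i = j then E i else 0\<^sub>m n n)"
    and AE: "\<And>j. j \<le> d \<Longrightarrow> A j = msum n (\<lambda>i. P i j \<cdot>\<^sub>m E i) {..d}"
    using first_eigenmatrixE[OF F] by blast
  have Ac: "A k \<in> carrier_mat n n" if "k \<le> d" for k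
    unfolding AE[OF that] by (simp add: msum_def)
  have eigen: "A k * E l = P l k \<cdot>\<^sub>m E l" if k: "k \<le> d" for k
  proof (rule eq_matI)
    fix a b assume "a < dim_row (P l k \<cdot>\<^sub>m E l)" "b < dim_col (P l k \<cdot>\<^sub>m E l)"
    then have ab: "a < n" "b < n" using Ec[OF ijl(3)] by auto
    have "(A k * E l) $$ (a,b) = (\<Sum>i\<le>d. P i k * (E i * E l) $$ (a,b))"
      unfolding AE[OF k] by (rule index_msum_smult_mult) (use Ec ijl ab in auto)
    also have "\<dots> = (\<Sum>i\<le>d. if i = l then P l k * E l $$ (a,b) else 0)"
      using Eorth ijl(3) Ec ab by (intro sum.cong refl) auto
    finally show "(A k * E l) $$ (a,b) = (P l k \<cdot>\<^sub>m E l) $$ (a,b)" using ijl(3) ab Ec[OF ijl(3)] by simp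
  qed (use Ac[OF k] Ec[OF ijl(3)] in auto)
  obtain a b where ab: "a < n" "b < n" "E l $$ (a,b) \<noteq> 0"
    using Enz[OF ijl(3)] Ec[OF ijl(3)] by (metis carrier_matD eq_matI index_zero_mat)
  have "A i * A j * E l = A i * (P l j \<cdot>\<^sub>m E l)"
    using Ac[OF ijl(1)] Ac[OF ijl(2)] Ec[OF ijl(3)] by (simp add: assoc_mult_mat[of _ n n _ n _ n] eigen ijl)
  also have "\<dots> = P l j \<cdot>\<^sub>m (P l i \<cdot>\<^sub>m E l)"
    using Ac[OF ijl(1)] Ec[OF ijl(3)] by (simp add: mult_smult_distrib[of _ n n _ n] eigen ijl)
  finally have "(A i * A j * E l) $$ (a,b) = P l i * P l j * E l $$ (a,b)"
    using ab Ec[OF ijl(3)] by simp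
  moreover have "(A i * A j * E l) $$ (a,b) = (\<Sum>k\<le>d. c k * P l k) * E l $$ (a,b)"
    unfolding c using Ac Ec[OF ijl(3)] ab
    by (subst index_msum_smult_mult) (auto simp: eigen sum_distrib_right mult.assoc)
  ultimately show ?thesis using ab(3) by simp
qed

lemma sym_assoc_scheme_triangle:
  assumes S: "sym_assoc_scheme n d A" and k: "k \<le> d"
    and c: "A k * A k = msum n (\<lambda>j. c j \<cdot>\<^sub>m A j) {..d}" and ck: "c k \<noteq> 0"
    and ab: "a < n" "b < n" "A k $$ (a,b) = 1"
  obtains y where "y < n" "A k $$ (a,y) = 1" "A k $$ (y,b) = 1"
proof -
  have Ac: "A j \<in> carrier_mat n n" if "j \<le> d" for j using sym_assoc_scheme_carrier[OF S that] .
  obtain k' where k': "k' \<le> d" "A k' $$ (a,b) = 1" "\<And>j. j \<le> d \<Longrightarrow> j \<noteq> k' \<Longrightarrow> A j $$ (a,b) = 0"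
    using sym_assoc_scheme_unique_relation[OF S ab(1,2)] by blast
  have "k' = k" using k'(3)[OF k] ab(3) by fastforce
  have "(A k * A k) $$ (a,b) = (\<Sum>j\<le>d. (c j \<cdot>\<^sub>m A j) $$ (a,b))"
    unfolding c using ab by (simp add: msum_def)
  also have "\<dots> = (\<Sum>j\<le>d. c j * A j $$ (a,b))"
  proof (intro sum.cong refl)
    fix j assume "j \<in> {..d}"
    then show "(c j \<cdot>\<^sub>m A j) $$ (a,b) = c j * A j $$ (a,b)" using Ac[of j] ab by simp
  qed
  also have "\<dots> = (\<Sum>j\<le>d. if j = k then c k else 0)"
    using k' \<open>k' = k\<close> by (intro sum.cong) auto
  also have "\<dots> = c k" using k by simp
  finally have "(\<Sum>t\<in>{0..<n}. A k $$ (a,t) * A k $$ (t,b)) \<noteq> 0"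
    using ck Ac[OF k] ab by (simp add: scalar_prod_def)
  then obtain y where y: "y \<in> {0..<n}" "A k $$ (a,y) * A k $$ (y,b) \<noteq> 0"
    by (rule sum.not_neutral_contains_not_neutral)
  then show ?thesis
    using that sym_assoc_scheme_entry_01[OF S k ab(1), of y] sym_assoc_scheme_entry_01[OF S k _ ab(2), of y]
    by auto
qed

lemma P_q_intersection_number:
  assumes q: "q \<ge> 4" and c: "\<And>l. l \<le> 3 \<Longrightarrow> P_q q l 1 * P_q q l 1 = (\<Sum>k\<le>3. c k * P_q q l k)"
  shows "c 1 = (of_nat q / 2 - 1)^2"
proof -
  define y where "y = (of_nat q :: complex) / 2"
  have sum4: "(\<Sum>k\<le>3. f k) = f 0 + f 1 + f 2 + f 3" for f :: "nat \<Rightarrow> complex"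
    by (simp add: numeral_eq_Suc)
  have P: "P_q q 0 0 = 1" "P_q q 0 1 = 2*y^2 - 2*y" "P_q q 0 2 = 2*y^2" "P_q q 0 3 = 2*y - 2"
    "P_q q 1 0 = 1" "P_q q 1 1 = y" "P_q q 1 2 = -y" "P_q q 1 3 = -1"
    "P_q q 2 0 = 1" "P_q q 2 1 = -y + 1" "P_q q 2 2 = -y" "P_q q 2 3 = 2*y - 2"
    "P_q q 3 0 = 1" "P_q q 3 1 = -y" "P_q q 3 2 = y" "P_q q 3 3 = -1"
    unfolding P_q_def y_def Let_def by (simp_all add: numeral_eq_Suc field_simps power2_eq_square)
  have e0: "(2*y^2 - 2*y) * (2*y^2 - 2*y) = c 0 + c 1 * (2*y^2 - 2*y) + c 2 * (2*y^2) + c 3 * (2*y - 2)"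
    using c[of 0] unfolding sum4 P by simp
  have e1: "y * y = c 0 + c 1 * y + c 2 * (-y) + c 3 * (-1)"
    using c[of 1] unfolding sum4 P by simp
  have e2: "(-y + 1) * (-y + 1) = c 0 + c 1 * (-y + 1) + c 2 * (-y) + c 3 * (2*y - 2)"
    using c[of 2] unfolding sum4 P by simp
  have e3: "(-y) * (-y) = c 0 + c 1 * (-y) + c 2 * y + c 3 * (-1)"
    using c[of 3] unfolding sum4 P by simp
  have "q * q \<noteq> 1" using q by auto
  then have "(of_nat q :: complex) * of_nat q \<noteq> 1" by (metis of_nat_1 of_nat_mult of_nat_eq_iff)
  then have "y \<noteq> 0" "4*y^2 - 1 \<noteq> 0"
    using q unfolding y_def by (auto simp: power2_eq_square field_simps)
  have "2 * (y * (c 1 - c 2)) = (c 0 + c 1 * y + c 2 * (-y) + c 3 * (-1)) - (c 0 + c 1 * (-y) + c 2 * y + c 3 * (-1))"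
    by (simp add: algebra_simps)
  also have "\<dots> = 0" unfolding e1[symmetric] e3[symmetric] by simp
  finally have c12: "c 2 = c 1" using \<open>y \<noteq> 0\<close> by simp
  have "c 1 * (4*y^2 - 1) = (c 0 + c 1 * (2*y^2 - 2*y) + c 2 * (2*y^2) + c 3 * (2*y - 2))
      - (c 0 + c 1 * (-y + 1) + c 2 * (-y) + c 3 * (2*y - 2))"
    unfolding c12 by (simp add: power2_eq_square algebra_simps)
  also have "\<dots> = (y - 1)^2 * (4*y^2 - 1)"
    unfolding e0[symmetric] e2[symmetric] by (simp add: power2_eq_square algebra_simps)
  finally have "c 1 * (4*y^2 - 1) = (y - 1)^2 * (4*y^2 - 1)" .
  then show ?thesis using \<open>4*y^2 - 1 \<noteq> 0\<close> unfolding y_def by simp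
qed

section \<open>Matrices in the Bose--Mesner algebra of a 3-class scheme\<close>

definition W_weight :: "complex \<Rightarrow> complex \<Rightarrow> complex \<Rightarrow> nat \<Rightarrow> complex" where
  "W_weight w1 w2 w3 k = (if k = 1 then w1 else if k = 2 then w2 else if k = 3 then w3 else 1)"

definition weight_quotients :: "complex \<Rightarrow> complex \<Rightarrow> complex \<Rightarrow> complex set" where
  "weight_quotients w1 w2 w3 =
     {W_weight w1 w2 w3 i * W_weight w1 w2 w3 j / (W_weight w1 w2 w3 k * W_weight w1 w2 w3 l)
      | i j k l. i \<le> 3 \<and> j \<le> 3 \<and> k \<le> 3 \<and> l \<le> 3}"

lemma W_of_carrier:
  assumes "sym_assoc_scheme n 3 A"
  shows "W_of n A w1 w2 w3 \<in> carrier_mat n n"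
  using sym_assoc_scheme_carrier[OF assms] unfolding W_of_def by auto

lemma index_W_of:
  assumes S: "sym_assoc_scheme n 3 A" and ab: "a < n" "b < n" and k: "k \<le> 3" "A k $$ (a,b) = 1"
  shows "W_of n A w1 w2 w3 $$ (a,b) = W_weight w1 w2 w3 k"
proof -
  obtain k' where k': "k' \<le> 3" "A k' $$ (a,b) = 1" "\<And>j. j \<le> 3 \<Longrightarrow> j \<noteq> k' \<Longrightarrow> A j $$ (a,b) = 0"
    using sym_assoc_scheme_unique_relation[OF S ab] by blast
  have "k' = k" using k'(3)[OF k(1)] k(2) by fastforce
  have Ac: "A j \<in> carrier_mat n n" if "j \<le> 3" for j using sym_assoc_scheme_carrier[OF S that] .
  have "W_of n A w1 w2 w3 $$ (a,b) = A 0 $$ (a,b) + w1 * A 1 $$ (a,b) + w2 * A 2 $$ (a,b) + w3 * A 3 $$ (a,b)"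
    unfolding W_of_def using Ac[of 0] Ac[of 1] Ac[of 2] Ac[of 3] ab by simp
  also have "\<dots> = W_weight w1 w2 w3 k"
  proof -
    have "k = 0 \<or> k = 1 \<or> k = 2 \<or> k = 3" using k(1) by auto
    then show ?thesis using k'(2,3) \<open>k' = k\<close> by (elim disjE) (auto simp: W_weight_def)
  qed
  finally show ?thesis .
qed

lemma W_of_nonzero:
  assumes S: "sym_assoc_scheme n 3 A" and nz: "w1 \<noteq> 0" "w2 \<noteq> 0" "w3 \<noteq> 0"
  shows "\<forall>a<n. \<forall>b<n. W_of n A w1 w2 w3 $$ (a,b) \<noteq> 0"
proof (intro allI impI)
  fix a b assume ab: "a < n" "b < n"
  obtain k where "k \<le> 3" "A k $$ (a,b) = 1"
    using sym_assoc_scheme_unique_relation[OF S ab] by blast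
  then show "W_of n A w1 w2 w3 $$ (a,b) \<noteq> 0"
    using index_W_of[OF S ab] nz by (simp add: W_weight_def)
qed

lemma cross_ratios_W_of_subset:
  assumes S: "sym_assoc_scheme n 3 A"
  shows "cross_ratios n (W_of n A w1 w2 w3) \<subseteq> weight_quotients w1 w2 w3"
proof
  fix z assume "z \<in> cross_ratios n (W_of n A w1 w2 w3)"
  then obtain a b x y where h: "a < n" "b < n" "x < n" "y < n"
    "z = cross_ratio (W_of n A w1 w2 w3) a b x y"
    unfolding cross_ratios_def by blast
  have entry: "\<exists>k\<le>3. W_of n A w1 w2 w3 $$ (u,v) = W_weight w1 w2 w3 k" if "u < n" "v < n" for u v
    using sym_assoc_scheme_unique_relation[OF S that] index_W_of[OF S that] by metis
  obtain i where i: "i \<le> 3" "W_of n A w1 w2 w3 $$ (a,x) = W_weight w1 w2 w3 i"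
    using entry[OF h(1,3)] by blast
  obtain j where j: "j \<le> 3" "W_of n A w1 w2 w3 $$ (b,y) = W_weight w1 w2 w3 j"
    using entry[OF h(2,4)] by blast
  obtain k where k: "k \<le> 3" "W_of n A w1 w2 w3 $$ (a,y) = W_weight w1 w2 w3 k"
    using entry[OF h(1,4)] by blast
  obtain l where l: "l \<le> 3" "W_of n A w1 w2 w3 $$ (b,x) = W_weight w1 w2 w3 l"
    using entry[OF h(2,3)] by blast
  show "z \<in> weight_quotients w1 w2 w3"
    unfolding weight_quotients_def h(5) cross_ratio_def mem_Collect_eq
    by (intro exI[of _ i] exI[of _ j] exI[of _ k] exI[of _ l]) (simp add: i j k l)
qed

text \<open>A pair of points in relation k, read in both orders, contributes the cross ratio of weight k squared.\<close>

lemma W_weight_square_mem_cross_ratios: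
  assumes S: "sym_assoc_scheme n 3 A" and k: "k \<le> 3"
  shows "W_weight w1 w2 w3 k ^ 2 \<in> cross_ratios n (W_of n A w1 w2 w3)"
proof -
  obtain a b where ab: "a < n" "b < n" "A k $$ (a,b) = 1"
    by (rule sym_assoc_scheme_relation_nonempty[OF S k])
  have "A k $$ (b,a) = 1" using sym_assoc_scheme_symmetric[OF S k ab(1,2)] ab(3) by simp
  then have "cross_ratio (W_of n A w1 w2 w3) a b b a = W_weight w1 w2 w3 k ^ 2"
    unfolding cross_ratio_def
    using index_W_of[OF S ab(1,2) k ab(3)] index_W_of[OF S ab(2,1) k]
      index_W_of[OF S ab(1,1) _ sym_assoc_scheme_diagonal[OF S ab(1)]]
      index_W_of[OF S ab(2,2) _ sym_assoc_scheme_diagonal[OF S ab(2)]]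
    by (simp add: power2_eq_square W_weight_def)
  then show ?thesis unfolding cross_ratios_def mem_Collect_eq
    by (intro exI[of _ a] exI[of _ b] exI[of _ b] exI[of _ a]) (simp add: ab)
qed

text \<open>A triangle a, y, b in relation 1 contributes the cross ratio 1 / w1.\<close>

lemma inverse_weight1_mem_cross_ratios:
  assumes S: "sym_assoc_scheme n 3 A" and F: "first_eigenmatrix n 3 A (P_q q)" and q: "q \<ge> 4"
    and w1: "w1 \<noteq> 0"
  shows "1 / w1 \<in> cross_ratios n (W_of n A w1 w2 w3)"
proof -
  obtain c where c: "A 1 * A 1 = msum n (\<lambda>k. c k \<cdot>\<^sub>m A k) {..3}"
    using S unfolding sym_assoc_scheme_def in_span_def by force
  have "c 1 = (of_nat q / 2 - 1)^2"
    by (rule P_q_intersection_number[OF q first_eigenmatrix_mult[OF F _ _ _ c]]) simp_all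
  moreover have "q \<noteq> 2" using q by simp
  then have "(of_nat q :: complex) \<noteq> 2" by (metis of_nat_numeral of_nat_eq_iff)
  ultimately have c1: "c 1 \<noteq> 0" by (auto simp: field_simps)
  obtain a b where ab: "a < n" "b < n" "A 1 $$ (a,b) = 1"
    by (rule sym_assoc_scheme_relation_nonempty[OF S, of 1]) simp
  obtain y where y: "y < n" "A 1 $$ (a,y) = 1" "A 1 $$ (y,b) = 1"
    by (rule sym_assoc_scheme_triangle[OF S _ c c1 ab]) simp
  have ya: "A 1 $$ (y,a) = 1" using sym_assoc_scheme_symmetric[OF S _ ab(1) y(1)] y(2) by simp
  have "cross_ratio (W_of n A w1 w2 w3) a y a b = 1 / w1"
    unfolding cross_ratio_def
    using index_W_of[OF S ab(1,2) _ ab(3)] index_W_of[OF S ab(1) y(1) _ y(2)]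
      index_W_of[OF S y(1) ab(2) _ y(3)] index_W_of[OF S y(1) ab(1) _ ya]
      index_W_of[OF S ab(1,1) _ sym_assoc_scheme_diagonal[OF S ab(1)]] w1
    by (simp add: field_simps W_weight_def)
  then show ?thesis unfolding cross_ratios_def mem_Collect_eq
    by (intro exI[of _ a] exI[of _ y] exI[of _ a] exI[of _ b]) (simp add: ab y)
qed

lemma typeII_inequiv_W_of:
  assumes S: "sym_assoc_scheme n 3 A"
    and nzw: "w1 \<noteq> 0" "w2 \<noteq> 0" "w3 \<noteq> 0" and nzv: "v1 \<noteq> 0" "v2 \<noteq> 0" "v3 \<noteq> 0"
    and z: "z \<in> cross_ratios n (W_of n A w1 w2 w3)" "z \<notin> weight_quotients v1 v2 v3"
  shows "typeII_inequiv n (W_of n A w1 w2 w3) (W_of n A v1 v2 v3)"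
  using z cross_ratios_W_of_subset[OF S]
  by (intro typeII_inequiv_if_cross_ratio W_of_carrier W_of_nonzero S nzw nzv) auto

section \<open>Quotients of powers and Dickson polynomials\<close>

fun dickson :: "nat \<Rightarrow> 'a::comm_ring_1 \<Rightarrow> 'a" where
  "dickson 0 c = 2"
| "dickson (Suc 0) c = c"
| "dickson (Suc (Suc n)) c = c * dickson (Suc n) c - dickson n c"

lemma dickson_of_real: "dickson d (of_real c) = (of_real (dickson d c) :: 'a::{real_algebra_1,comm_ring_1})"
  by (induction d c rule: dickson.induct) simp_all

lemma dickson_small_degree:
  "dickson 1 c = c" "dickson 2 c = c*c - 2" "dickson 3 c = c*c*c - 3*c" "dickson 4 c = dickson 2 (dickson 2 c)"
  by (simp_all add: numeral_eq_Suc algebra_simps)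

lemma dickson_add_inverse:
  fixes u :: "'a::field"
  assumes u: "u \<noteq> 0"
  shows "dickson d (u + 1/u) = u^d + 1/u^d"
proof (induction d "u + 1/u" rule: dickson.induct)
  case (3 n)
  then show ?case using u by (simp add: field_simps)
qed simp_all

lemma power2_add_inverse:
  fixes w :: complex and c :: real
  assumes "w \<noteq> 0" "w + 1/w = of_real c"
  shows "w^2 + 1/w^2 = of_real (dickson 2 c)"
  using dickson_add_inverse[OF assms(1), of 2] unfolding assms(2) dickson_of_real by simp

lemma power_quotient_add_inverse:
  fixes u :: "'a::field"
  assumes u: "u \<noteq> 0"
  shows "u^p / u^m + 1 / (u^p / u^m) = dickson (if m \<le> p then p - m else m - p) (u + 1/u)"
proof (cases "m \<le> p")
  case True
  then have "u^p / u^m = u^(p - m)" using u by (simp add: power_diff)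
  then show ?thesis using True dickson_add_inverse[OF u, of "p - m"] by simp
next
  case False
  then have "u^m / u^p = u^(m - p)" using u by (simp add: power_diff)
  moreover have "u^p / u^m = 1 / (u^m / u^p)" by simp
  ultimately show ?thesis using False dickson_add_inverse[OF u, of "m - p"] by (simp add: add.commute)
qed

lemma weight_quotient_add_inverse:
  fixes u :: complex and s :: "nat \<Rightarrow> complex" and p m :: "nat \<Rightarrow> nat"
  assumes u: "u \<noteq> 0"
    and form: "\<And>i. i \<le> 3 \<Longrightarrow> W_weight v1 v2 v3 i = s i * u ^ p i / u ^ m i"
    and s: "\<And>i. i \<le> 3 \<Longrightarrow> s i = 1 \<or> s i = -1"
    and bd: "\<And>i. i \<le> 3 \<Longrightarrow> p i \<le> M \<and> m i \<le> M'"
    and ijkl: "i \<le> 3" "j \<le> 3" "k \<le> 3" "l \<le> 3"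
    and zq: "z = W_weight v1 v2 v3 i * W_weight v1 v2 v3 j / (W_weight v1 v2 v3 k * W_weight v1 v2 v3 l)"
  shows "\<exists>d \<le> 2 * (M + M'). z + 1/z = s i * s j * s k * s l * dickson d (u + 1/u)"
proof -
  define \<epsilon> where "\<epsilon> = s i * s j * s k * s l"
  define P where "P = p i + p j + m k + m l"
  define Q where "Q = m i + m j + p k + p l"
  define D where "D = (if Q \<le> P then P - Q else Q - P)"
  have \<epsilon>: "\<epsilon> = 1 \<or> \<epsilon> = -1"
    unfolding \<epsilon>_def using s[OF ijkl(1)] s[OF ijkl(2)] s[OF ijkl(3)] s[OF ijkl(4)] by auto
  have sq: "s i * s i = 1" if "i \<le> 3" for i using s[OF that] by auto
  have "z = \<epsilon> * u^P / u^Q"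
  proof -
    have "z = (s i * u^(p i) / u^(m i)) * (s j * u^(p j) / u^(m j)) /
              ((s k * u^(p k) / u^(m k)) * (s l * u^(p l) / u^(m l)))"
      using zq form ijkl by simp
    also have "\<dots> = (s i * s j * s k * s l) / (s k * s k * (s l * s l)) *
        (u^(p i) * u^(p j) * u^(m k) * u^(m l)) / (u^(m i) * u^(m j) * u^(p k) * u^(p l))"
      using u s[OF ijkl(3)] s[OF ijkl(4)] by (auto simp: field_simps)
    also have "\<dots> = \<epsilon> * u^P / u^Q"
      unfolding \<epsilon>_def P_def Q_def using sq[OF ijkl(3)] sq[OF ijkl(4)] by (simp add: power_add)
    finally show ?thesis .
  qed
  then have "z + 1/z = \<epsilon> * (u^P / u^Q + 1 / (u^P / u^Q))"
    using \<epsilon> by (auto simp: field_simps)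
  also have "\<dots> = \<epsilon> * dickson D (u + 1/u)"
    unfolding D_def using power_quotient_add_inverse[OF u] by simp
  finally have "z + 1/z = \<epsilon> * dickson D (u + 1/u)" .
  moreover have "D \<le> 2 * (M + M')"
    unfolding D_def P_def Q_def using bd[OF ijkl(1)] bd[OF ijkl(2)] bd[OF ijkl(3)] bd[OF ijkl(4)] by auto
  ultimately show ?thesis unfolding \<epsilon>_def by blast
qed

lemma not_mem_weight_quotients_signed:
  fixes u z :: complex and s :: "nat \<Rightarrow> complex" and p m :: "nat \<Rightarrow> nat" and K c :: real
  assumes u: "u \<noteq> 0"
    and form: "\<And>i. i \<le> 3 \<Longrightarrow> W_weight v1 v2 v3 i = s i * u ^ p i / u ^ m i"
    and s: "\<And>i. i \<le> 3 \<Longrightarrow> s i = 1 \<or> s i = -1"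
    and bd: "\<And>i. i \<le> 3 \<Longrightarrow> p i \<le> M \<and> m i \<le> M'"
    and zK: "z + 1/z = of_real K" and uc: "u + 1/u = of_real c"
    and K: "\<And>d. d \<le> 2 * (M + M') \<Longrightarrow> K \<noteq> dickson d c \<and> K \<noteq> - dickson d c"
  shows "z \<notin> weight_quotients v1 v2 v3"
proof
  assume "z \<in> weight_quotients v1 v2 v3"
  then obtain i j k l where ijkl: "i \<le> 3" "j \<le> 3" "k \<le> 3" "l \<le> 3"
    and zq: "z = W_weight v1 v2 v3 i * W_weight v1 v2 v3 j / (W_weight v1 v2 v3 k * W_weight v1 v2 v3 l)"
    unfolding weight_quotients_def by blast
  obtain d where d: "d \<le> 2 * (M + M')" and e: "z + 1/z = s i * s j * s k * s l * dickson d (u + 1/u)"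
    using weight_quotient_add_inverse[OF u form s bd ijkl zq] by blast
  have "of_real K = s i * s j * s k * s l * of_real (dickson d c)"
    using e unfolding zK uc dickson_of_real .
  moreover have "s i * s j * s k * s l = 1 \<or> s i * s j * s k * s l = -1"
    using s[OF ijkl(1)] s[OF ijkl(2)] s[OF ijkl(3)] s[OF ijkl(4)] by auto
  ultimately have "K = dickson d c \<or> K = - dickson d c"
    by (metis mult_1 mult_minus1 of_real_eq_iff of_real_minus)
  with K[OF d] show False by blast
qed

lemma not_mem_weight_quotients:
  fixes u z :: complex and p m :: "nat \<Rightarrow> nat" and K c :: real
  assumes u: "u \<noteq> 0"
    and form: "\<And>i. i \<le> 3 \<Longrightarrow> W_weight v1 v2 v3 i = u ^ p i / u ^ m i"
    and bd: "\<And>i. i \<le> 3 \<Longrightarrow> p i \<le> M \<and> m i \<le> M'"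
    and zK: "z + 1/z = of_real K" and uc: "u + 1/u = of_real c"
    and K: "\<And>d. d \<le> 2 * (M + M') \<Longrightarrow> K \<noteq> dickson d c"
  shows "z \<notin> weight_quotients v1 v2 v3"
proof
  assume "z \<in> weight_quotients v1 v2 v3"
  then obtain i j k l where ijkl: "i \<le> 3" "j \<le> 3" "k \<le> 3" "l \<le> 3"
    and zq: "z = W_weight v1 v2 v3 i * W_weight v1 v2 v3 j / (W_weight v1 v2 v3 k * W_weight v1 v2 v3 l)"
    unfolding weight_quotients_def by blast
  have "\<exists>d \<le> 2 * (M + M'). z + 1/z = 1 * 1 * 1 * 1 * dickson d (u + 1/u)"
    by (rule weight_quotient_add_inverse[where s = "\<lambda>_. 1", OF u _ _ bd ijkl zq]) (simp_all add: form)
  then obtain d where d: "d \<le> 2 * (M + M')" and e: "z + 1/z = dickson d (u + 1/u)" by auto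
  have "of_real K = (of_real (dickson d c) :: complex)" using e unfolding zK uc dickson_of_real .
  with K[OF d] show False by simp
qed

lemma weight_quotients_subset_Reals:
  assumes "v1 \<in> \<real>" "v2 \<in> \<real>" "v3 \<in> \<real>"
  shows "weight_quotients v1 v2 v3 \<subseteq> \<real>"
proof -
  have "W_weight v1 v2 v3 i \<in> \<real>" for i using assms by (simp add: W_weight_def)
  then show ?thesis unfolding weight_quotients_def by (auto intro!: Reals_divide Reals_mult)
qed

lemma power2_notin_Reals:
  fixes x :: complex and c :: real
  assumes x: "x \<noteq> 0" and xc: "x + 1/x = of_real c" and c: "\<bar>c\<bar> < 2" "c \<noteq> 0"
  shows "x^2 \<notin> \<real>"
proof
  assume "x^2 \<in> \<real>"
  then obtain t where t: "x^2 = of_real t" by (auto elim: Reals_cases)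
  have "x * x + 1 = of_real c * x" using xc x by (simp add: field_simps)
  then have "of_real t + 1 = of_real c * x" using t by (simp add: power2_eq_square)
  then have "x = of_real ((t + 1) / c)" using c(2) by (simp add: field_simps)
  then obtain \<rho> where \<rho>: "x = of_real \<rho>" by blast
  have "\<rho> \<noteq> 0" using x \<rho> by simp
  have "of_real (\<rho> + 1/\<rho>) = (of_real c :: complex)" using xc \<rho> by simp
  then have \<rho>c: "\<rho> + 1/\<rho> = c" by (simp only: of_real_eq_iff)
  have "c * c = (\<rho> - 1/\<rho>) * (\<rho> - 1/\<rho>) + 4"
    unfolding \<rho>c[symmetric] using \<open>\<rho> \<noteq> 0\<close> by (simp add: field_simps)
  moreover have "\<bar>c\<bar> * \<bar>c\<bar> < 2 * 2" using c(1) by (intro mult_strict_mono') auto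
  ultimately show False by (simp add: abs_mult_self_eq)
qed

lemma add_inverse_Reals_imp_Reals:
  fixes x :: complex and c :: real
  assumes x: "x \<noteq> 0" and xc: "x + 1/x = of_real c" and c: "2 < \<bar>c\<bar>"
  shows "x \<in> \<real>"
proof -
  define \<delta> where "\<delta> = sqrt (c * c - 4)"
  have "2 * 2 < \<bar>c\<bar> * \<bar>c\<bar>" using c by (intro mult_strict_mono) auto
  then have \<delta>2: "\<delta> * \<delta> = c * c - 4" unfolding \<delta>_def by (simp add: abs_mult_self_eq)
  have "x * x - of_real c * x + 1 = 0" using xc x by (simp add: field_simps)
  moreover have "(x - of_real ((c + \<delta>)/2)) * (x - of_real ((c - \<delta>)/2))
      = x * x - of_real c * x + of_real ((c * c - \<delta> * \<delta>) / 4)"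
    by (simp add: field_simps)
  moreover have "(c * c - \<delta> * \<delta>) / 4 = 1" using \<delta>2 by simp
  ultimately have "(x - of_real ((c + \<delta>)/2)) * (x - of_real ((c - \<delta>)/2)) = 0" by simp
  then have "x = of_real ((c + \<delta>)/2) \<or> x = of_real ((c - \<delta>)/2)"
    by (simp only: mult_eq_0_iff right_minus_eq)
  then show ?thesis by (metis Reals_of_real)
qed

lemma dominant_quotient_add_inverse:
  fixes T b :: real
  assumes T: "T > 0" and b: "b > 0" and sep: "(1 \<le> b \<and> 5 * b < T) \<or> (b \<le> 1 \<and> 5 * T < b)"
    and k: "k \<le> 2"
  shows "25 < T^2 / b^k + 1 / (T^2 / b^k)"
  using sep
proof
  assume h: "1 \<le> b \<and> 5 * b < T"
  have "T^2 / b^2 \<le> T^2 / b^k"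
    using h k b T by (intro divide_left_mono power_increasing) auto
  moreover have "25 < (T / b)^2" using power_strict_mono[of 5 "T / b" 2] h b by (simp add: field_simps)
  moreover have "0 < 1 / (T^2 / b^k)" using T b by simp
  ultimately show ?thesis by (simp only: power_divide)
next
  assume h: "b \<le> 1 \<and> 5 * T < b"
  have "b^2 / T^2 \<le> b^k / T^2"
    using h k b T by (intro divide_right_mono power_decreasing) auto
  moreover have "25 < (b / T)^2" using power_strict_mono[of 5 "b / T" 2] h T by (simp add: field_simps)
  moreover have "0 < T^2 / b^k" "1 / (T^2 / b^k) = b^k / T^2" using T b by simp_all
  ultimately show ?thesis by (simp only: power_divide)
qed

lemma weight_quotient_signed_monomial:
  fixes T b t :: real
  assumes t: "of_real t \<in> weight_quotients (of_real b) (of_real b) (of_real (-T))"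
  shows "\<exists>A1 A2 B1 B2. A1 + B1 \<le> 2 \<and> A2 + B2 \<le> 2 \<and> t = (-1)^(B1 + B2) * (T^B1 * b^A1 / (T^B2 * b^A2))"
proof -
  define \<alpha> :: "nat \<Rightarrow> nat" where "\<alpha> i = (if i = 1 \<or> i = 2 then 1 else 0)" for i
  define \<beta> :: "nat \<Rightarrow> nat" where "\<beta> i = (if i = 3 then 1 else 0)" for i
  have "W_weight (of_real b) (of_real b) (of_real (-T)) i = of_real ((-T)^(\<beta> i) * b^(\<alpha> i))" if "i \<le> 3" for i
  proof -
    have "i = 0 \<or> i = 1 \<or> i = 2 \<or> i = 3" using that by auto
    then show ?thesis unfolding \<alpha>_def \<beta>_def by (auto simp: W_weight_def)
  qed
  then obtain i j k l where "i \<le> 3" "j \<le> 3" "k \<le> 3" "l \<le> 3"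
    and "of_real t = (of_real ((-T)^(\<beta> i) * b^(\<alpha> i) * ((-T)^(\<beta> j) * b^(\<alpha> j))
      / ((-T)^(\<beta> k) * b^(\<alpha> k) * ((-T)^(\<beta> l) * b^(\<alpha> l)))) :: complex)"
    using t unfolding weight_quotients_def by auto
  then have "t = (-T)^(\<beta> i + \<beta> j) * b^(\<alpha> i + \<alpha> j) / ((-T)^(\<beta> k + \<beta> l) * b^(\<alpha> k + \<alpha> l))"
    by (simp only: of_real_eq_iff) (simp add: power_add algebra_simps)
  also have "\<dots> = (-1)^(\<beta> i + \<beta> j + (\<beta> k + \<beta> l))
      * (T^(\<beta> i + \<beta> j) * b^(\<alpha> i + \<alpha> j) / (T^(\<beta> k + \<beta> l) * b^(\<alpha> k + \<alpha> l)))"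
    by (cases "even (\<beta> k + \<beta> l)") (auto simp: power_minus[of T] power_add field_simps)
  finally show ?thesis unfolding \<alpha>_def \<beta>_def by (intro exI conjI) auto
qed

text \<open>The weights 1, b, b, -T with T much larger than b and 1 / b: a positive weight quotient either
  avoids T, and is then b to a power of absolute value at most 2, or contains T squared.\<close>

lemma positive_weight_quotient_add_inverse:
  fixes T b t :: real
  assumes T: "T > 0" and b: "b > 0" and sep: "(1 \<le> b \<and> 5 * b < T) \<or> (b \<le> 1 \<and> 5 * T < b)"
    and t: "of_real t \<in> weight_quotients (of_real b) (of_real b) (of_real (-T))" "t > 0"
  shows "t + 1/t = 2 \<or> t + 1/t = b + 1/b \<or> t + 1/t = dickson 2 (b + 1/b) \<or> 25 < t + 1/t"
proof -
  from weight_quotient_signed_monomial[OF t(1)] obtain A1 A2 B1 B2 where bnd: "A1 + B1 \<le> 2" "A2 + B2 \<le> 2"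
    and tt': "t = (-1)^(B1 + B2) * (T^B1 * b^A1 / (T^B2 * b^A2))"
    by blast
  define t' where "t' = T^B1 * b^A1 / (T^B2 * b^A2)"
  have "t' > 0" unfolding t'_def using T b by simp
  have "even (B1 + B2)"
  proof (rule ccontr)
    assume "odd (B1 + B2)"
    then have "t = - t'" using tt' unfolding t'_def by simp
    with \<open>t' > 0\<close> t(2) show False by simp
  qed
  then have "t = t'" using tt' unfolding t'_def by simp
  have "B1 = B2 \<or> (B1 = 2 \<and> B2 = 0) \<or> (B1 = 0 \<and> B2 = 2)"
    using bnd \<open>even (B1 + B2)\<close> by presburger
  then show ?thesis
  proof (elim disjE)
    assume "B1 = B2"
    then have "t + 1/t = dickson (if A2 \<le> A1 then A1 - A2 else A2 - A1) (b + 1/b)"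
      using power_quotient_add_inverse[of b A1 A2] b T unfolding \<open>t = t'\<close> t'_def by simp
    moreover have "(if A2 \<le> A1 then A1 - A2 else A2 - A1) \<in> {0, 1, 2}" using bnd by auto
    ultimately show ?thesis by (auto simp: dickson_small_degree)
  next
    assume "B1 = 2 \<and> B2 = 0"
    then have "t = T^2 / b^A2" "A2 \<le> 2" using bnd unfolding \<open>t = t'\<close> t'_def by auto
    then show ?thesis using dominant_quotient_add_inverse[OF T b sep] by simp
  next
    assume "B1 = 0 \<and> B2 = 2"
    then have "T^2 / b^A1 = 1/t" "A1 \<le> 2" using bnd unfolding \<open>t = t'\<close> t'_def by auto
    then have "t + 1/t = T^2 / b^A1 + 1 / (T^2 / b^A1)" "A1 \<le> 2" by (simp_all add: add.commute)
    then show ?thesis using dominant_quotient_add_inverse[OF T b sep, of A1] by simp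
  qed
qed

section \<open>Estimates for the parameters of the six matrices\<close>

text \<open>For x = q, the entries singled out below satisfy w + 1/w = sigma_m x: the entry w3 of W1 and
  of W2 (m = 1), w1 = w2 of W2 (m = 2), w1 of W3, w2 of W4, w1 of W5, and w1 of W6 (with r).\<close>

definition sigma1 :: "real \<Rightarrow> real" where "sigma1 x = 3 - x^2"
definition sigma2 :: "real \<Rightarrow> real" where "sigma2 x = (x^3 - 3*x^2 - x + 7) / (x^2 - 2*x - 1)"
definition sigma3 :: "real \<Rightarrow> real" where "sigma3 x = 2 * (x^2 - 6) / (x^2 - 4)"
definition sigma4 :: "real \<Rightarrow> real" where "sigma4 x = -2 * (x^2 - 2) / x^2"
definition sigma5 :: "real \<Rightarrow> real" where "sigma5 x = -2 / x"
definition sigma6 :: "real \<Rightarrow> real \<Rightarrow> real" where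
  "sigma6 x r = (-(x-1)*(x-2) + (x+2)*r) / (2*x*(x+1))"

lemma sigma1_le:
  fixes x :: real assumes "x \<ge> 4"
  shows "sigma1 x \<le> -13"
  using power_mono[OF assms, of 2] unfolding sigma1_def by simp

lemma sigma2_bounds:
  fixes x :: real assumes x: "x \<ge> 4"
  shows "x - 2 < sigma2 x" "sigma2 x < x - 1"
proof -
  have "4 * x \<le> x * x" using mult_right_mono[OF x, of x] x by simp
  then have d: "x^2 - 2*x - 1 > 0" using x unfolding power2_eq_square by linarith
  have "sigma2 x = x - 1 - (2*x - 6) / (x^2 - 2*x - 1)"
    unfolding sigma2_def using d by (simp add: field_simps power2_eq_square power3_eq_cube)
  moreover have "0 < (2*x - 6) / (x^2 - 2*x - 1)" using d x by simp
  moreover have "(2*x - 6) / (x^2 - 2*x - 1) < 1"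
    using d zero_le_power2[of "x - 2"] by (simp add: power2_eq_square algebra_simps)
  ultimately show "x - 2 < sigma2 x" "sigma2 x < x - 1" by simp_all
qed

lemma sigma3_bounds:
  fixes x :: real assumes x: "x \<ge> 4"
  shows "5/3 \<le> sigma3 x" "sigma3 x < 2" "x \<ge> 8 \<Longrightarrow> 29/15 \<le> sigma3 x"
proof -
  have x2: "16 \<le> x^2" using power_mono[OF x, of 2] by simp
  then have e: "sigma3 x = 2 - 4 / (x^2 - 4)" unfolding sigma3_def by (simp add: field_simps)
  show "5/3 \<le> sigma3 x" unfolding e using x2 by (simp add: field_simps)
  show "sigma3 x < 2" unfolding e using x2 by simp
  show "29/15 \<le> sigma3 x" if "x \<ge> 8"
    unfolding e using power_mono[OF that, of 2] by (simp add: field_simps)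
qed

lemma sigma4_bounds:
  fixes x :: real assumes x: "x \<ge> 4"
  shows "-2 < sigma4 x" "sigma4 x \<le> -7/4" "x \<ge> 8 \<Longrightarrow> 7/4 \<le> dickson 2 (sigma4 x)"
proof -
  have x2: "16 \<le> x^2" using power_mono[OF x, of 2] by simp
  have e: "sigma4 x = -2 + 4 / x^2" unfolding sigma4_def using x by (simp add: field_simps)
  show "-2 < sigma4 x" unfolding e using x by simp
  have "4 / x^2 \<le> 4 / 16" using x2 by (intro divide_left_mono) auto
  then show "sigma4 x \<le> -7/4" unfolding e by simp
  show "7/4 \<le> dickson 2 (sigma4 x)" if "x \<ge> 8"
  proof -
    define t where "t = 4 / x^2"
    have "t \<le> 4/64" unfolding t_def using power_mono[OF that, of 2] by (intro divide_left_mono) auto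
    moreover have "0 \<le> t" unfolding t_def by simp
    moreover have "dickson 2 (sigma4 x) = 2 - 4*t + t*t" unfolding e t_def[symmetric] dickson_small_degree
      by (simp add: algebra_simps)
    ultimately show ?thesis using mult_nonneg_nonneg[of t t] by linarith
  qed
qed

lemma sigma5_bounds:
  fixes x :: real assumes x: "x \<ge> 4"
  shows "-1/2 \<le> sigma5 x" "sigma5 x < 0" "dickson 3 (sigma5 x) < 6 / x"
proof -
  show "-1/2 \<le> sigma5 x" "sigma5 x < 0" unfolding sigma5_def using x by (simp_all add: field_simps)
  then have "sigma5 x * sigma5 x * sigma5 x < 0" by (simp add: mult_pos_neg mult_neg_neg)
  then show "dickson 3 (sigma5 x) < 6 / x" unfolding dickson_small_degree by (simp add: sigma5_def)
qed

lemma dickson2_sigma5: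
  fixes x :: real assumes "x > 0"
  shows "dickson 2 (sigma5 x) = sigma4 x"
  unfolding dickson_small_degree sigma5_def sigma4_def using assms by (simp add: field_simps power2_eq_square)

text \<open>The estimates for sigma6 compare (x + 2) r, whose square is (x + 2)^2 (17 x^2 - 18 x + 1), with
  quadratic polynomials; each polynomial inequality is checked by expanding around its base point.\<close>

lemma sigma6_less_iff:
  fixes x r c :: real assumes "x \<ge> 4"
  shows "sigma6 x r < c \<longleftrightarrow> -(x-1)*(x-2) + (x+2)*r < c * (2*x*(x+1))"
  using assms unfolding sigma6_def by (simp add: pos_divide_less_eq)

lemma less_sigma6_iff:
  fixes x r c :: real assumes "x \<ge> 4"
  shows "c < sigma6 x r \<longleftrightarrow> c * (2*x*(x+1)) < -(x-1)*(x-2) + (x+2)*r"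
  using assms unfolding sigma6_def by (simp add: pos_less_divide_eq)

lemma sigma6_radical_square:
  fixes x r :: real assumes "r^2 = (17*x - 1)*(x - 1)"
  shows "((x+2)*r)^2 = (x+2)^2*(17*x^2 - 18*x + 1)"
proof -
  have "((x+2)*r)^2 = (x+2)^2 * r^2" by (simp add: power_mult_distrib)
  then show ?thesis unfolding assms by (simp add: algebra_simps power2_eq_square)
qed

lemma sigma6_pos_less_2:
  fixes x r :: real assumes x: "x \<ge> 4" and r: "r > 0" "r^2 = (17*x - 1)*(x - 1)"
  shows "sigma6 x r < 2"
proof -
  define k where "k = x - 4"
  have "k \<ge> 0" "x = 4 + k" using x unfolding k_def by auto
  moreover have "0 < 160 + k * (392 + k * (312 + k * (88 + k * 8)))" using \<open>k \<ge> 0\<close>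
    by (intro add_pos_nonneg mult_nonneg_nonneg add_nonneg_nonneg) auto
  ultimately have "((x+2)*r)^2 < (5*x^2 + x + 2)^2"
    unfolding sigma6_radical_square[OF r(2)] by (simp add: power2_eq_square algebra_simps)
  then have "(x+2)*r < 5*x^2 + x + 2" by (rule power_less_imp_less_base) (use x in simp)
  then show ?thesis unfolding sigma6_less_iff[OF x] by (simp add: algebra_simps power2_eq_square)
qed

lemma sigma6_pos_greater:
  fixes x r :: real assumes x: "x \<ge> 6" and r: "r > 0" "r^2 = (17*x - 1)*(x - 1)"
  shows "3/2 + 2/x < sigma6 x r"
proof -
  have "x \<ge> 4" using x by simp
  define k where "k = x - 6"
  have "k \<ge> 0" "x = 6 + k" using x unfolding k_def by auto
  moreover have "0 < 2044 + k * (1888 + k * (473 + k * (42 + k)))" using \<open>k \<ge> 0\<close>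
    by (intro add_pos_nonneg mult_nonneg_nonneg add_nonneg_nonneg) auto
  ultimately have "(4*x^2 + 4*x + 6)^2 < ((x+2)*r)^2"
    unfolding sigma6_radical_square[OF r(2)] by (simp add: power2_eq_square algebra_simps)
  then have "4*x^2 + 4*x + 6 < (x+2)*r" by (rule power_less_imp_less_base) (use x r in simp)
  moreover have "(3/2 + 2/x) * (2*x*(x+1)) = (3*x + 4)*(x+1)" using x by (simp add: field_simps)
  moreover have "(3*x + 4)*(x+1) + (x-1)*(x-2) = 4*x^2 + 4*x + 6" by (simp add: algebra_simps power2_eq_square)
  ultimately show ?thesis using x unfolding less_sigma6_iff[OF \<open>x \<ge> 4\<close>] by linarith
qed

lemma sigma6_pos_less:
  fixes x r :: real assumes x: "x \<ge> 8" and r: "r > 0" "r^2 = (17*x - 1)*(x - 1)"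
  shows "sigma6 x r < 19/10"
proof -
  have "x \<ge> 4" using x by simp
  define k where "k = x - 8"
  have "k \<ge> 0" "x = 8 + k" using x unfolding k_def by auto
  moreover have "0 < 127584 + k * (117028 + k * (33163 + k * (3774 + k * 151)))" using \<open>k \<ge> 0\<close>
    by (intro add_pos_nonneg mult_nonneg_nonneg add_nonneg_nonneg) auto
  ultimately have "(5*((x+2)*r))^2 < (24*x^2 + 4*x + 10)^2"
    unfolding power_mult_distrib[of 5] sigma6_radical_square[OF r(2)]
    by (simp add: power2_eq_square algebra_simps)
  then have "5*((x+2)*r) < 24*x^2 + 4*x + 10" by (rule power_less_imp_less_base) (use x in simp)
  moreover have "-(x-1)*(x-2)*5 + (24*x^2 + 4*x + 10) = 19/10*(2*x*(x+1))*5"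
    by (simp add: algebra_simps power2_eq_square)
  ultimately show ?thesis using x unfolding sigma6_less_iff[OF \<open>x \<ge> 4\<close>] by linarith
qed

lemma sigma6_neg_less:
  fixes x r :: real assumes x: "x \<ge> 4" and r: "r < 0" "r^2 = (17*x - 1)*(x - 1)"
  shows "sigma6 x r < -2"
proof -
  define k where "k = x - 4"
  have "k \<ge> 0" "x = 4 + k" using x unfolding k_def by auto
  moreover have "0 < 1760 + k * (2072 + k * (824 + k * (136 + k * 8)))" using \<open>k \<ge> 0\<close>
    by (intro add_pos_nonneg mult_nonneg_nonneg add_nonneg_nonneg) auto
  ultimately have "(3*x^2 + 7*x - 2)^2 < ((x+2)*(-r))^2"
    using sigma6_radical_square[OF r(2)] by (simp add: power2_eq_square algebra_simps)
  then have "3*x^2 + 7*x - 2 < (x+2)*(-r)"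
    by (rule power_less_imp_less_base) (use x r in \<open>intro mult_nonneg_nonneg\<close>; simp)
  moreover have "-(x-1)*(x-2) - (3*x^2 + 7*x - 2) = -2*(2*x*(x+1))" by (simp add: algebra_simps power2_eq_square)
  ultimately show ?thesis unfolding sigma6_less_iff[OF x] by simp
qed

lemma sigma6_neg_greater:
  fixes x r :: real assumes x: "x \<ge> 4" and r: "r < 0" "r^2 = (17*x - 1)*(x - 1)"
  shows "-66/25 < sigma6 x r"
proof -
  define k where "k = x - 4"
  have "k \<ge> 0" "x = 4 + k" using x unfolding k_def by auto
  moreover have "0 < 1677600 + k * (1131240 + k * (269704 + k * (26232 + k * 824)))" using \<open>k \<ge> 0\<close>
    by (intro add_pos_nonneg mult_nonneg_nonneg add_nonneg_nonneg) auto
  ultimately have "(25*((x+2)*(-r)))^2 < (107*x^2 + 207*x - 50)^2"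
    using sigma6_radical_square[OF r(2)] unfolding power_mult_distrib[of 25]
    by (simp add: power2_eq_square algebra_simps)
  moreover have "0 \<le> 107*x^2 + 207*x - 50" using x zero_le_power2[of x] by linarith
  ultimately have "25*((x+2)*(-r)) < 107*x^2 + 207*x - 50" by (rule power_less_imp_less_base)
  moreover have "-66/25 * (2*x*(x+1)) * 25 = -(x-1)*(x-2)*25 - (107*x^2 + 207*x - 50)"
    by (simp add: algebra_simps power2_eq_square)
  ultimately show ?thesis unfolding less_sigma6_iff[OF x] by simp
qed

lemma sigma6_4:
  fixes r :: real assumes r: "r^2 = (17*4 - 1)*(4 - 1)"
  shows "r > 0 \<Longrightarrow> 39/20 < sigma6 4 r" "r < 0 \<Longrightarrow> sigma6 4 r < -9/4"
proof -
  have e: "sigma6 4 r = 3/20 * r - 3/20" unfolding sigma6_def by (simp add: field_simps)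
  have "14^2 < \<bar>r\<bar>^2" using r by simp
  then have "14 < \<bar>r\<bar>" by (rule power_less_imp_less_base) simp
  then show "r > 0 \<Longrightarrow> 39/20 < sigma6 4 r" "r < 0 \<Longrightarrow> sigma6 4 r < -9/4" unfolding e by auto
qed

lemma sigma6_6:
  fixes r :: real assumes r: "r^2 = (17*6 - 1)*(6 - 1)"
  shows "r > 0 \<Longrightarrow> 1895/1000 < sigma6 6 r \<and> sigma6 6 r < 1905/1000" "r < 0 \<Longrightarrow> -243/100 < sigma6 6 r"
proof -
  have e: "sigma6 6 r = 2/21 * r - 5/21" unfolding sigma6_def by (simp add: field_simps)
  have "(224/10)^2 < \<bar>r\<bar>^2" "\<bar>r\<bar>^2 < (225/10)^2" using r by (simp_all add: power2_eq_square)
  then have "224/10 < \<bar>r\<bar>" "\<bar>r\<bar> < 225/10"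
    using power_less_imp_less_base[of _ 2] by fastforce+
  then show "r > 0 \<Longrightarrow> 1895/1000 < sigma6 6 r \<and> sigma6 6 r < 1905/1000" "r < 0 \<Longrightarrow> -243/100 < sigma6 6 r"
    unfolding e by auto
qed

lemma dickson2_sigma6_pos_window:
  fixes x r :: real
  assumes r: "r > 0" "r^2 = (17*x - 1)*(x - 1)"
  defines "K \<equiv> dickson 2 (sigma6 x r)"
  shows "x = 4 \<Longrightarrow> 9/5 < K \<and> K < 2" "x = 6 \<Longrightarrow> 159/100 < K \<and> K < 163/100"
    "x \<ge> 8 \<Longrightarrow> 6/x < K \<and> K < 161/100"
proof -
  have sq: "a * a < b * b" if "0 \<le> a" "a < b" for a b :: real using that by (intro mult_strict_mono) auto
  have K: "K = sigma6 x r * sigma6 x r - 2" unfolding K_def dickson_small_degree ..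
  show "9/5 < K \<and> K < 2" if h: "x = 4"
  proof -
    have "39/20 < sigma6 x r" "sigma6 x r < 2"
      using sigma6_4(1)[of r] sigma6_pos_less_2[of x r] r h by simp_all
    then show ?thesis unfolding K using sq[of "39/20" "sigma6 x r"] sq[of "sigma6 x r" 2] by auto
  qed
  show "159/100 < K \<and> K < 163/100" if h: "x = 6"
  proof -
    have "1895/1000 < sigma6 x r" "sigma6 x r < 1905/1000" using sigma6_6(1)[of r] r h by auto
    then show ?thesis unfolding K using sq[of "1895/1000" "sigma6 x r"] sq[of "sigma6 x r" "1905/1000"] by auto
  qed
  show "6/x < K \<and> K < 161/100" if h: "x \<ge> 8"
  proof -
    have lo: "3/2 + 2/x < sigma6 x r" by (rule sigma6_pos_greater[OF _ r]) (use h in simp)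
    have hi: "sigma6 x r < 19/10" by (rule sigma6_pos_less[OF h r])
    have p: "0 < 2/x" using h by simp
    have "(3/2 + 2/x) * (3/2 + 2/x) < sigma6 x r * sigma6 x r" using sq[of "3/2 + 2/x"] lo p by auto
    moreover have "(3/2 + 2/x) * (3/2 + 2/x) = 9/4 + 6/x + (2/x) * (2/x)" by (simp add: algebra_simps)
    moreover have "sigma6 x r * sigma6 x r < 19/10 * (19/10)"
      using sq[of "sigma6 x r" "19/10"] hi lo p by simp
    ultimately show ?thesis unfolding K using mult_nonneg_nonneg[of "2/x" "2/x"] p by (intro conjI) linarith+
  qed
qed

lemma dickson2_sigma6_pos:
  fixes x r :: real
  assumes x: "x = 4 \<or> x = 6 \<or> x \<ge> 8" and r: "r > 0" "r^2 = (17*x - 1)*(x - 1)"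
  defines "K \<equiv> dickson 2 (sigma6 x r)"
  shows "0 < K" "K < 2" "6 / x < K"
    "K \<noteq> sigma3 x" "K \<noteq> dickson 2 (sigma3 x)" "K \<noteq> dickson 2 (sigma4 x)"
proof -
  note window = dickson2_sigma6_pos_window[OF r, folded K_def]
  have "0 < K \<and> K < 2 \<and> 6 / x < K \<and> K \<noteq> sigma3 x \<and> K \<noteq> dickson 2 (sigma3 x) \<and> K \<noteq> dickson 2 (sigma4 x)"
    using x
  proof (elim disjE)
    assume h: "x = 4"
    have "sigma3 x = 5/3" "dickson 2 (sigma3 x) = 7/9" "dickson 2 (sigma4 x) = 17/16" "6 / x = 3/2"
      unfolding h sigma3_def sigma4_def dickson_small_degree by simp_all
    with window(1)[OF h] show ?thesis by auto
  next
    assume h: "x = 6"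
    have "sigma3 x = 15/8" "dickson 2 (sigma3 x) = 97/64" "dickson 2 (sigma4 x) = 127/81" "6 / x = 1"
      unfolding h sigma3_def sigma4_def dickson_small_degree by simp_all
    with window(2)[OF h] show ?thesis by auto
  next
    assume h: "x \<ge> 8"
    have s3: "29/15 \<le> sigma3 x" using sigma3_bounds(3)[OF _ h] h by simp
    then have "29/15 * (29/15) \<le> sigma3 x * sigma3 x" by (intro mult_mono) auto
    moreover have "7/4 \<le> dickson 2 (sigma4 x)" using sigma4_bounds(3)[OF _ h] h by simp
    moreover have "0 < 6 / x" using h by simp
    ultimately show ?thesis using window(3)[OF h] s3 unfolding dickson_small_degree
      by (intro conjI; (linarith | (rule notI, linarith)))
  qed
  then show "0 < K" "K < 2" "6 / x < K"
    "K \<noteq> sigma3 x" "K \<noteq> dickson 2 (sigma3 x)" "K \<noteq> dickson 2 (sigma4 x)"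
    by auto
qed

lemma dickson2_sigma6_neg:
  fixes x r :: real
  assumes x: "x = 4 \<or> x = 6 \<or> x \<ge> 8" and r: "r < 0" "r^2 = (17*x - 1)*(x - 1)"
  defines "K \<equiv> dickson 2 (sigma6 x r)"
  shows "2 < K" "K < 3106/625" "x = 4 \<Longrightarrow> 49/16 < K" "x = 6 \<Longrightarrow> K < 39049/10000"
proof -
  have x4: "x \<ge> 4" using x by auto
  have sq: "a * a < b * b" if "0 \<le> a" "a < b" for a b :: real using that by (intro mult_strict_mono) auto
  have K: "K = (- sigma6 x r) * (- sigma6 x r) - 2" unfolding K_def dickson_small_degree by simp
  have hi: "- sigma6 x r > 2" using sigma6_neg_less[OF x4 r] by simp
  have lo: "- sigma6 x r < 66/25" using sigma6_neg_greater[OF x4 r] by simp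
  show "2 < K" "K < 3106/625" unfolding K using sq[of 2 "- sigma6 x r"] sq[of "- sigma6 x r" "66/25"] hi lo by auto
  show "49/16 < K" if "x = 4"
    unfolding K using sq[of "9/4" "- sigma6 x r"] sigma6_4(2)[of r] r that by simp
  show "K < 39049/10000" if "x = 6"
    unfolding K using sq[of "- sigma6 x r" "243/100"] sigma6_6(2)[of r] r that hi by simp
qed

text \<open>In W2 the entry w3 is negative, say w3 = -T, and w1 = w2 = beta q T.\<close>

definition beta :: "real \<Rightarrow> real \<Rightarrow> real" where
  "beta x T = ((x-3)*T + (x-1)) / (x^2 - 2*x - 1)"

lemma beta_denominator_pos:
  fixes x :: real assumes "x \<ge> 4"
  shows "x^2 - 2*x - 1 > 0"
proof -
  have "4 * x \<le> x * x" using mult_right_mono[OF assms, of x] assms by simp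
  then show ?thesis using assms unfolding power2_eq_square by linarith
qed

lemma beta_large:
  fixes x T :: real assumes x: "x \<ge> 4" and T: "T > 1" "T + 1/T = x^2 - 3"
  shows "1 < beta x T" "5 * beta x T < T"
proof -
  have D: "x^2 - 2*x - 1 > 0" by (rule beta_denominator_pos[OF x])
  have "1/T < 1" using T(1) by simp
  then have Tg: "x^2 - 4 < T" using T(2) by linarith
  define k where "k = x - 4"
  have k: "k \<ge> 0" "x = 4 + k" using x unfolding k_def by auto
  have "(x-3)*(x^2 - 4) \<le> (x-3)*T" using Tg x by (intro mult_left_mono) auto
  moreover have "0 < 8 + k * (15 + k * (8 + k))" using k(1)
    by (intro add_pos_nonneg mult_nonneg_nonneg add_nonneg_nonneg) auto
  then have "x^2 - 2*x - 1 < (x-3)*(x^2 - 4) + x - 1"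
    using k(2) by (simp add: power2_eq_square algebra_simps)
  ultimately show "1 < beta x T" unfolding beta_def using D by simp
  have "0 < (x - 7/2)^2 + 7/4" by (simp add: add_nonneg_pos)
  then have q: "0 < x^2 - 7*x + 14" by (simp add: power2_eq_square algebra_simps)
  have "(x^2 - 7*x + 14)*(x^2 - 4) < (x^2 - 7*x + 14)*T" using Tg q by simp
  moreover have "0 < 9 + k * (23 + k * (22 + k * (9 + k)))" using k(1)
    by (intro add_pos_nonneg mult_nonneg_nonneg add_nonneg_nonneg) auto
  then have "5*(x-1) < (x^2 - 7*x + 14)*(x^2 - 4)"
    using k(2) by (simp add: power2_eq_square algebra_simps)
  ultimately have "5*((x-3)*T + (x-1)) < (x^2 - 2*x - 1)*T" by (simp add: algebra_simps power2_eq_square)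
  then show "5 * beta x T < T" unfolding beta_def using D by (simp add: pos_divide_less_eq mult.commute)
qed

lemma beta_inverse:
  fixes x T :: real assumes x: "x \<ge> 4" and T: "T \<noteq> 0" "T + 1/T = x^2 - 3"
  shows "beta x T * beta x (1/T) = 1"
proof -
  have D: "x^2 - 2*x - 1 > 0" by (rule beta_denominator_pos[OF x])
  have "((x-3)*T + (x-1)) * ((x-3)*(1/T) + (x-1)) = (x-3)^2 + (x-1)^2 + (x-3)*(x-1)*(T + 1/T)"
    using T(1) by (simp add: field_simps power2_eq_square)
  also have "\<dots> = (x^2 - 2*x - 1)^2" unfolding T(2) by (simp add: algebra_simps power2_eq_square)
  finally show ?thesis unfolding beta_def using D by (simp add: power2_eq_square)
qed

lemma beta_add_inverse:
  fixes x T :: real assumes x: "x \<ge> 4" and T: "T \<noteq> 0" "T + 1/T = x^2 - 3"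
  shows "beta x T + 1 / beta x T = sigma2 x"
proof -
  have inv: "beta x T * beta x (1/T) = 1" by (rule beta_inverse[OF x T])
  then have "beta x T \<noteq> 0" by auto
  then have "1 / beta x T = beta x (1/T)" using inv by (simp add: field_simps)
  moreover have "beta x T + beta x (1/T) = ((x-3)*(T + 1/T) + 2*(x-1)) / (x^2 - 2*x - 1)"
    unfolding beta_def by (simp add: add_divide_distrib[symmetric] algebra_simps)
  moreover have "\<dots> = sigma2 x"
    unfolding T(2) sigma2_def by (simp add: algebra_simps power2_eq_square power3_eq_cube)
  ultimately show ?thesis by simp
qed

lemma beta_separated:
  fixes x T :: real assumes x: "x \<ge> 4" and T: "T > 0" "T + 1/T = x^2 - 3"
  shows "(1 \<le> beta x T \<and> 5 * beta x T < T) \<or> (beta x T \<le> 1 \<and> 5 * T < beta x T)"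
proof (cases "T > 1")
  case True
  then show ?thesis using beta_large[OF x True T(2)] by simp
next
  case False
  have "T \<noteq> 1" using T(2) power_mono[OF x, of 2] by auto
  then have "1 < 1/T" using T(1) False by simp
  moreover have "1/T + 1/(1/T) = x^2 - 3" using T(2) by simp
  ultimately have B: "1 < beta x (1/T)" "5 * beta x (1/T) < 1/T" using beta_large[OF x] by blast+
  have e: "beta x T = 1 / beta x (1/T)"
    using beta_inverse[OF x _ T(2)] T(1) B(1) by (simp add: field_simps)
  have "5 * beta x (1/T) * T < 1" using B(2) T(1) by (simp add: field_simps)
  then have "5 * T < beta x T" unfolding e using B(1) by (simp add: field_simps)
  then show ?thesis unfolding e using B(1) by simp
qed

lemma le2_cases: "(d::nat) \<le> 2 \<Longrightarrow> d = 0 \<or> d = 1 \<or> d = 2"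
  by auto

lemma dickson2_sigma2_ne_dickson_sigma1:
  fixes x :: real assumes x: "x \<ge> 4" and d: "d \<le> 2"
  shows "dickson 2 (sigma2 x) \<noteq> dickson d (sigma1 x)"
proof -
  have s2: "x - 2 < sigma2 x" "sigma2 x < x - 1" using sigma2_bounds[OF x] by auto
  have s1: "sigma1 x \<le> -13" by (rule sigma1_le[OF x])
  have "4 * x \<le> x * x" using mult_right_mono[OF x, of x] x by simp
  then have "sigma2 x < - sigma1 x" using s2 x unfolding sigma1_def power2_eq_square by linarith
  then have "sigma2 x * sigma2 x < (- sigma1 x) * (- sigma1 x)" using s2 x by (intro mult_strict_mono) auto
  moreover have "2 * 2 < sigma2 x * sigma2 x" using s2 x by (intro mult_strict_mono) auto
  ultimately show ?thesis using le2_cases[OF d] s1 by (auto simp: dickson_small_degree)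
qed

lemma sigma3_sigma4_expansion:
  fixes x :: real assumes x: "x \<ge> 4"
  obtains t u where "sigma3 x = 2 - t" "sigma4 x = -2 + u" "0 < u" "u < t" "t \<le> 1/3"
proof
  have x2: "16 \<le> x^2" using power_mono[OF x, of 2] by simp
  show "sigma3 x = 2 - 4 / (x^2 - 4)" unfolding sigma3_def using x2 by (simp add: field_simps)
  show "sigma4 x = -2 + 4 / x^2" unfolding sigma4_def using x by (simp add: field_simps)
  show "0 < 4 / x^2" using x by simp
  show "4 / x^2 < 4 / (x^2 - 4)" using x2 by (intro divide_strict_left_mono mult_pos_pos) auto
  show "4 / (x^2 - 4) \<le> 1/3" using x2 by (simp add: divide_le_eq)
qed

lemma dickson2_sigma3_ne_dickson_sigma4:
  fixes x :: real assumes x: "x \<ge> 4" and d: "d \<le> 2"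
  shows "dickson 2 (sigma3 x) \<noteq> dickson d (sigma4 x)"
proof -
  obtain t u where s3: "sigma3 x = 2 - t" and s4: "sigma4 x = -2 + u" and tu: "0 < u" "u < t" "t \<le> 1/3"
    by (rule sigma3_sigma4_expansion[OF x])
  have "0 < t * (4 - t)" "0 < (t - u) * (4 - t - u)" using tu by (intro mult_pos_pos; simp)+
  then show ?thesis using le2_cases[OF d] tu zero_le_square[of t] unfolding s3 s4
    by (auto simp: dickson_small_degree algebra_simps; linarith)
qed

lemma sigma4_ne_signed_dickson_sigma3:
  fixes x :: real assumes x: "x \<ge> 4" and d: "d \<le> 2"
  shows "sigma4 x \<noteq> dickson d (sigma3 x) \<and> sigma4 x \<noteq> - dickson d (sigma3 x)"
proof -
  obtain t u where s3: "sigma3 x = 2 - t" and s4: "sigma4 x = -2 + u" and tu: "0 < u" "u < t" "t \<le> 1/3"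
    by (rule sigma3_sigma4_expansion[OF x])
  have "t * t \<le> t / 3" using tu by (simp add: mult_left_le)
  then show ?thesis using le2_cases[OF d] tu zero_le_square[of t] unfolding s3 s4
    by (auto simp: dickson_small_degree algebra_simps; linarith)
qed

lemma sigma5_ne_dickson_sigma4:
  fixes x :: real assumes x: "x \<ge> 4" and d: "d \<le> 2"
  shows "sigma5 x \<noteq> dickson d (sigma4 x)"
proof -
  have s5: "-1/2 \<le> sigma5 x" "sigma5 x < 0" using sigma5_bounds[OF x] by auto
  have s4: "-2 < sigma4 x" "sigma4 x \<le> -7/4" using sigma4_bounds[OF x] by auto
  have "7/4 * (7/4) \<le> (- sigma4 x) * (- sigma4 x)" using s4 by (intro mult_mono) auto
  then show ?thesis using le2_cases[OF d] s4 s5 by (auto simp: dickson_small_degree)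
qed

lemma dickson2_sigma6_pos_separated:
  fixes x r :: real
  assumes x: "x = 4 \<or> x = 6 \<or> x \<ge> 8" and r: "r > 0" "r^2 = (17*x - 1)*(x - 1)"
  defines "K \<equiv> dickson 2 (sigma6 x r)"
  shows "d \<le> 2 \<Longrightarrow> K \<noteq> dickson d (sigma3 x) \<and> K \<noteq> - dickson d (sigma3 x)"
    "d \<le> 2 \<Longrightarrow> K \<noteq> dickson d (sigma4 x)"
    "d \<le> 4 \<Longrightarrow> K \<noteq> dickson d (sigma5 x)"
proof -
  have x4: "x \<ge> 4" using x by auto
  note F = dickson2_sigma6_pos[OF x r, folded K_def]
  have s3: "5/3 \<le> sigma3 x" using sigma3_bounds[OF x4] by simp
  have "5/3 * (5/3) \<le> sigma3 x * sigma3 x" using s3 by (intro mult_mono) auto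
  then have "0 < dickson 2 (sigma3 x)" unfolding dickson_small_degree by simp
  then show "K \<noteq> dickson d (sigma3 x) \<and> K \<noteq> - dickson d (sigma3 x)" if "d \<le> 2"
    using le2_cases[OF that] F s3 by (auto simp: dickson_small_degree)
  have s4: "sigma4 x \<le> -7/4" using sigma4_bounds[OF x4] by simp
  show "K \<noteq> dickson d (sigma4 x)" if "d \<le> 2"
    using le2_cases[OF that] F s4 by (auto simp: dickson_small_degree)
  have s5: "sigma5 x < 0" "dickson 3 (sigma5 x) < 6 / x" "dickson 2 (sigma5 x) = sigma4 x"
    using sigma5_bounds[OF x4] dickson2_sigma5[of x] x4 by auto
  show "K \<noteq> dickson d (sigma5 x)" if "d \<le> 4"
  proof -
    have "d = 0 \<or> d = 1 \<or> d = 2 \<or> d = 3 \<or> d = 4" using that by auto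
    then show ?thesis using F s4 s5 dickson_small_degree(4)[of "sigma5 x"] by (auto simp: dickson_small_degree(1))
  qed
qed

lemma dickson2_sigma6_neg_separated:
  fixes x r :: real
  assumes x: "x = 4 \<or> x = 6 \<or> x \<ge> 8" and r: "r < 0" "r^2 = (17*x - 1)*(x - 1)"
  defines "K \<equiv> dickson 2 (sigma6 x r)"
  shows "d \<le> 2 \<Longrightarrow> K \<noteq> dickson d (sigma1 x)"
    "K \<noteq> 2" "K \<noteq> sigma2 x" "K \<noteq> dickson 2 (sigma2 x)" "K < 25"
proof -
  have x4: "x \<ge> 4" using x by auto
  note F = dickson2_sigma6_neg[OF x r, folded K_def]
  have s1: "sigma1 x \<le> -13" by (rule sigma1_le[OF x4])
  have "13 * 13 \<le> (- sigma1 x) * (- sigma1 x)" using s1 by (intro mult_mono) auto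
  then show "K \<noteq> dickson d (sigma1 x)" if "d \<le> 2"
    using le2_cases[OF that] F s1 by (auto simp: dickson_small_degree)
  show "K \<noteq> 2" "K < 25" using F(1,2) by simp_all
  have s2: "x - 2 < sigma2 x" using sigma2_bounds[OF x4] by simp
  have "27/10 < sigma2 x"
  proof (cases "x \<ge> 8")
    case True
    then show ?thesis using s2 by simp
  next
    case False
    then have "x = 4 \<or> x = 6" using x by auto
    then show ?thesis by (auto simp: sigma2_def)
  qed
  then have "27/10 * (27/10) < sigma2 x * sigma2 x" by (intro mult_strict_mono) auto
  then show "K \<noteq> dickson 2 (sigma2 x)" using F(2) unfolding dickson_small_degree by simp
  show "K \<noteq> sigma2 x"
    using x
  proof (elim disjE)
    assume h: "x = 4" then show ?thesis using F(3)[OF h] by (simp add: sigma2_def)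
  next
    assume h: "x = 6" then show ?thesis using F(4)[OF h] by (simp add: sigma2_def)
  next
    assume "x \<ge> 8" then show ?thesis using s2 F(2) by simp
  qed
qed

section \<open>The six matrices\<close>

locale six_type_II_matrices =
  fixes q :: nat and A :: "nat \<Rightarrow> complex mat" and w :: "nat \<Rightarrow> nat \<Rightarrow> complex" and r :: real
  assumes even: "even q" and q4: "q \<ge> 4"
    and S: "sym_assoc_scheme (q^2 - 1) 3 A"
    and F: "first_eigenmatrix (q^2 - 1) 3 A (P_q q)"
    and nz: "\<forall>m\<in>{1..6}. \<forall>k\<in>{1,2,3}. w m k \<noteq> 0"
    and c1: "w 1 1 = w 1 2 \<and> w 1 2 = w 1 3 \<and> w 1 3 + 1 / w 1 3 + of_nat q ^ 2 - 3 = 0"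
    and c2: "w 2 3 + 1 / w 2 3 + of_nat q ^ 2 - 3 = 0 \<and>
             w 2 1 = (-(of_nat q - 3) * w 2 3 + (of_nat q - 1)) / (of_nat q ^ 2 - 2 * of_nat q - 1) \<and>
             w 2 2 = w 2 1"
    and c3: "w 3 1 + 1 / w 3 1 = 2 * (of_nat q ^ 2 - 6) / (of_nat q ^ 2 - 4) \<and> w 3 2 = -1 \<and> w 3 3 = w 3 1"
    and c4: "w 4 1 = 1 \<and> w 4 3 = 1 \<and> w 4 2 + 1 / w 4 2 = -2 * (of_nat q ^ 2 - 2) / of_nat q ^ 2"
    and c5: "w 5 1 + 1 / w 5 1 = -2 / of_nat q \<and> w 5 2 = 1 / w 5 1 \<and> w 5 3 = 1"
    and c6: "r^2 = (17 * real q - 1) * (real q - 1) \<and>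
             w 6 1 + 1 / w 6 1 = a01 q r \<and>
             w 6 2 = (w 6 1 ^ 2 - 1) / (a12 q r * w 6 1 - a02 q r) \<and>
             w 6 3 = (w 6 1 ^ 2 - 1) / (a13 q r * w 6 1 - a03 q r)"
begin

abbreviation W :: "nat \<Rightarrow> complex mat" where
  "W m \<equiv> W_of (q^2 - 1) A (w m 1) (w m 2) (w m 3)"

lemma q_cases: "real q = 4 \<or> real q = 6 \<or> real q \<ge> 8"
proof -
  have "q \<noteq> 5" "q \<noteq> 7" using even by auto
  then show ?thesis using q4 by auto
qed

lemma q_ge4: "real q \<ge> 4"
  using q4 by simp

lemma weight_nonzero: "m \<in> {1..6} \<Longrightarrow> k \<in> {1,2,3} \<Longrightarrow> w m k \<noteq> 0"
  using nz by blast

lemma weight_square_mem_cross_ratios: "k \<in> {1,2,3} \<Longrightarrow> w m k ^ 2 \<in> cross_ratios (q^2 - 1) (W m)"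
  using W_weight_square_mem_cross_ratios[OF S, of k "w m 1" "w m 2" "w m 3"] by (auto simp: W_weight_def)

lemma typeII_inequiv_by_cross_ratio:
  assumes "m \<in> {1..6}" "m' \<in> {1..6}"
    and "z \<in> cross_ratios (q^2 - 1) (W m)" "z \<notin> weight_quotients (w m' 1) (w m' 2) (w m' 3)"
  shows "typeII_inequiv (q^2 - 1) (W m) (W m')"
  using assms weight_nonzero by (intro typeII_inequiv_W_of[OF S]) auto

lemma typeII_inequiv_by_nonreal:
  assumes "m \<in> {1..6}" "m' \<in> {1..6}" "z \<in> cross_ratios (q^2 - 1) (W m)" "z \<notin> \<real>"
    and "w m' 1 \<in> \<real>" "w m' 2 \<in> \<real>" "w m' 3 \<in> \<real>"
  shows "typeII_inequiv (q^2 - 1) (W m) (W m')"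
  using assms weight_quotients_subset_Reals[of "w m' 1" "w m' 2" "w m' 3"]
  by (intro typeII_inequiv_by_cross_ratio) auto

lemma W1_weights: "w 1 1 = w 1 3" "w 1 2 = w 1 3" "w 1 3 + 1 / w 1 3 = of_real (sigma1 (real q))"
proof -
  show "w 1 1 = w 1 3" "w 1 2 = w 1 3" using c1 by simp_all
  have "w 1 3 + 1 / w 1 3 = - (of_nat q ^ 2 - 3)" using c1 by (simp add: eq_neg_iff_add_eq_0 algebra_simps)
  then show "w 1 3 + 1 / w 1 3 = of_real (sigma1 (real q))" unfolding sigma1_def by simp
qed

lemma W1_real: "w 1 1 \<in> \<real>" "w 1 2 \<in> \<real>" "w 1 3 \<in> \<real>"
proof -
  have "2 < \<bar>sigma1 (real q)\<bar>" using sigma1_le[OF q_ge4] by simp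
  then have "w 1 3 \<in> \<real>" using add_inverse_Reals_imp_Reals W1_weights(3) weight_nonzero[of 1 3] by simp
  then show "w 1 1 \<in> \<real>" "w 1 2 \<in> \<real>" "w 1 3 \<in> \<real>" unfolding W1_weights(1,2) by simp_all
qed

lemma W2_parameters:
  obtains T where "T > 0" "T + 1/T = real q ^ 2 - 3" "w 2 3 = of_real (-T)"
    "w 2 1 = of_real (beta (real q) T)" "w 2 2 = of_real (beta (real q) T)"
proof -
  have "w 2 3 + 1 / w 2 3 = - (of_nat q ^ 2 - 3)" using c2 by (simp add: eq_neg_iff_add_eq_0 algebra_simps)
  then have w23: "w 2 3 + 1 / w 2 3 = of_real (sigma1 (real q))" unfolding sigma1_def by simp
  have s1: "sigma1 (real q) \<le> -13" by (rule sigma1_le[OF q_ge4])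
  then have "w 2 3 \<in> \<real>" using add_inverse_Reals_imp_Reals[OF weight_nonzero[of 2 3] w23] by simp
  then obtain \<rho> where \<rho>: "w 2 3 = of_real \<rho>" by (auto elim: Reals_cases)
  have "\<rho> \<noteq> 0" using \<rho> weight_nonzero[of 2 3] by auto
  have "of_real (\<rho> + 1/\<rho>) = (of_real (sigma1 (real q)) :: complex)" using w23 \<rho> by simp
  then have \<rho>1: "\<rho> + 1/\<rho> = sigma1 (real q)" by (simp only: of_real_eq_iff)
  have "\<rho> < 0"
  proof (rule ccontr)
    assume "\<not> \<rho> < 0"
    then have "0 < \<rho> + 1/\<rho>" using \<open>\<rho> \<noteq> 0\<close> by (simp add: add_pos_pos)
    with \<rho>1 s1 show False by simp
  qed
  show ?thesis
  proof (rule that)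
    show "0 < - \<rho>" using \<open>\<rho> < 0\<close> by simp
    show "- \<rho> + 1 / - \<rho> = real q ^ 2 - 3" using \<rho>1 unfolding sigma1_def by simp
    show "w 2 3 = of_real (- (- \<rho>))" using \<rho> by simp
    have "w 2 1 = (-(of_nat q - 3) * w 2 3 + (of_nat q - 1)) / (of_nat q ^ 2 - 2 * of_nat q - 1)"
      using c2 by simp
    also have "\<dots> = of_real (beta (real q) (- \<rho>))" unfolding \<rho> beta_def by (simp add: algebra_simps)
    finally show "w 2 1 = of_real (beta (real q) (- \<rho>))" .
    then show "w 2 2 = of_real (beta (real q) (- \<rho>))" using c2 by simp
  qed
qed

lemma W3_weights: "w 3 2 = -1" "w 3 3 = w 3 1" "w 3 1 + 1 / w 3 1 = of_real (sigma3 (real q))"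
  using c3 by (simp_all add: sigma3_def)

lemma W4_weights: "w 4 1 = 1" "w 4 3 = 1" "w 4 2 + 1 / w 4 2 = of_real (sigma4 (real q))"
  using c4 by (simp_all add: sigma4_def)

lemma W5_weights: "w 5 2 = 1 / w 5 1" "w 5 3 = 1" "w 5 1 + 1 / w 5 1 = of_real (sigma5 (real q))"
  using c5 by (simp_all add: sigma5_def)

lemma W6_weights: "r^2 = (17 * real q - 1) * (real q - 1)" "w 6 1 + 1 / w 6 1 = of_real (sigma6 (real q) r)"
  using c6 by (simp_all add: a01_def sigma6_def Let_def)

lemma W3_square_nonreal: "w 3 1 ^ 2 \<notin> \<real>"
  using sigma3_bounds[OF q_ge4] weight_nonzero[of 3 1]
  by (intro power2_notin_Reals[OF _ W3_weights(3)]) auto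

lemma W4_square_nonreal: "w 4 2 ^ 2 \<notin> \<real>"
  using sigma4_bounds[OF q_ge4] weight_nonzero[of 4 2]
  by (intro power2_notin_Reals[OF _ W4_weights(3)]) auto

lemma W5_square_nonreal: "w 5 1 ^ 2 \<notin> \<real>"
  using sigma5_bounds[OF q_ge4] weight_nonzero[of 5 1]
  by (intro power2_notin_Reals[OF _ W5_weights(3)]) auto

lemma r_nonzero: "r \<noteq> 0"
  using W6_weights(1) q_ge4 by auto

lemma W6_square_nonreal:
  assumes "r > 0"
  shows "w 6 1 ^ 2 \<notin> \<real>"
proof (rule power2_notin_Reals[OF weight_nonzero[of 6 1] W6_weights(2)])
  have "0 < dickson 2 (sigma6 (real q) r)" "dickson 2 (sigma6 (real q) r) < 2"
    using dickson2_sigma6_pos[OF q_cases assms W6_weights(1)] by simp_all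
  then have lo: "2 < sigma6 (real q) r * sigma6 (real q) r" and hi: "sigma6 (real q) r * sigma6 (real q) r < 2 * 2"
    unfolding dickson_small_degree by simp_all
  from lo show "sigma6 (real q) r \<noteq> 0" by auto
  show "\<bar>sigma6 (real q) r\<bar> < 2"
  proof (rule ccontr)
    assume "\<not> \<bar>sigma6 (real q) r\<bar> < 2"
    then have "2 * 2 \<le> \<bar>sigma6 (real q) r\<bar> * \<bar>sigma6 (real q) r\<bar>" by (intro mult_mono) auto
    with hi show False by (simp add: abs_mult_self_eq)
  qed
qed simp_all

lemma W6_real:
  assumes "r < 0"
  shows "w 6 1 \<in> \<real>" "w 6 2 \<in> \<real>" "w 6 3 \<in> \<real>"
proof -
  have "2 < dickson 2 (sigma6 (real q) r)" using dickson2_sigma6_neg[OF q_cases assms W6_weights(1)] by simp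
  then have "2 * 2 < \<bar>sigma6 (real q) r\<bar> * \<bar>sigma6 (real q) r\<bar>" unfolding dickson_small_degree by simp
  moreover have "\<bar>sigma6 (real q) r\<bar> * \<bar>sigma6 (real q) r\<bar> \<le> 2 * 2" if "\<bar>sigma6 (real q) r\<bar> \<le> 2"
    using that by (intro mult_mono) auto
  ultimately have "2 < \<bar>sigma6 (real q) r\<bar>" by linarith
  then show w61: "w 6 1 \<in> \<real>"
    using add_inverse_Reals_imp_Reals[OF weight_nonzero[of 6 1] W6_weights(2)] by simp
  have "a02 q r \<in> \<real>" "a03 q r \<in> \<real>" "a12 q r \<in> \<real>" "a13 q r \<in> \<real>"
    unfolding a02_def a03_def a12_def a13_def Let_def
    by (auto intro!: Reals_divide Reals_mult Reals_add Reals_diff Reals_minus Reals_power Reals_of_nat Reals_of_real)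
  then show "w 6 2 \<in> \<real>" "w 6 3 \<in> \<real>"
    using c6 w61 by (auto intro!: Reals_divide Reals_mult Reals_diff Reals_power)
qed

lemma W2_real: "w 2 1 \<in> \<real>" "w 2 2 \<in> \<real>" "w 2 3 \<in> \<real>"
  by (metis W2_parameters Reals_of_real)+

lemma W1_quotients_exclude:
  assumes "z + 1/z = of_real K" "\<And>d. d \<le> 2 \<Longrightarrow> K \<noteq> dickson d (sigma1 (real q))"
  shows "z \<notin> weight_quotients (w 1 1) (w 1 2) (w 1 3)"
  unfolding W1_weights(1,2)
proof (rule not_mem_weight_quotients[where p = "\<lambda>i. if i = 0 then 0 else 1" and m = "\<lambda>_. 0" and M = 1 and M' = 0])
  show "W_weight (w 1 3) (w 1 3) (w 1 3) i = w 1 3 ^ (if i = 0 then 0 else 1) / w 1 3 ^ 0"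
    if "i \<le> 3" for i
    using that by (auto simp: W_weight_def)
qed (use assms weight_nonzero[of 1 3] W1_weights(3) in auto)

lemma W3_quotients_exclude:
  assumes "z + 1/z = of_real K"
    "\<And>d. d \<le> 2 \<Longrightarrow> K \<noteq> dickson d (sigma3 (real q)) \<and> K \<noteq> - dickson d (sigma3 (real q))"
  shows "z \<notin> weight_quotients (w 3 1) (w 3 2) (w 3 3)"
  unfolding W3_weights(1,2)
proof (rule not_mem_weight_quotients_signed[where s = "\<lambda>i. if i = 2 then -1 else 1"
      and p = "\<lambda>i. if i = 1 \<or> i = 3 then 1 else 0" and m = "\<lambda>_. 0" and M = 1 and M' = 0])
  show "W_weight (w 3 1) (-1) (w 3 1) i
      = (if i = 2 then -1 else 1) * w 3 1 ^ (if i = 1 \<or> i = 3 then 1 else 0) / w 3 1 ^ 0" if "i \<le> 3" for i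
    using that by (auto simp: W_weight_def)
qed (use assms weight_nonzero[of 3 1] W3_weights(3) in auto)

lemma W4_quotients_exclude:
  assumes "z + 1/z = of_real K" "\<And>d. d \<le> 2 \<Longrightarrow> K \<noteq> dickson d (sigma4 (real q))"
  shows "z \<notin> weight_quotients (w 4 1) (w 4 2) (w 4 3)"
  unfolding W4_weights(1,2)
proof (rule not_mem_weight_quotients[where p = "\<lambda>i. if i = 2 then 1 else 0" and m = "\<lambda>_. 0" and M = 1 and M' = 0])
  show "W_weight 1 (w 4 2) 1 i = w 4 2 ^ (if i = 2 then 1 else 0) / w 4 2 ^ 0" for i
    by (simp add: W_weight_def)
qed (use assms weight_nonzero[of 4 2] W4_weights(3) in auto)

lemma W5_quotients_exclude:
  assumes "z + 1/z = of_real K" "\<And>d. d \<le> 4 \<Longrightarrow> K \<noteq> dickson d (sigma5 (real q))"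
  shows "z \<notin> weight_quotients (w 5 1) (w 5 2) (w 5 3)"
  unfolding W5_weights(1,2)
proof (rule not_mem_weight_quotients[where p = "\<lambda>i. if i = 1 then 1 else 0"
      and m = "\<lambda>i. if i = 2 then 1 else 0" and M = 1 and M' = 1])
  show "W_weight (w 5 1) (1 / w 5 1) 1 i
      = w 5 1 ^ (if i = 1 then 1 else 0) / w 5 1 ^ (if i = 2 then 1 else 0)" for i
    by (simp add: W_weight_def)
qed (use assms weight_nonzero[of 5 1] W5_weights(3) in auto)

lemma W1_W2_inequiv: "typeII_inequiv (q^2 - 1) (W 1) (W 2)"
proof -
  obtain T where T: "T > 0" "T + 1/T = real q ^ 2 - 3" and w21: "w 2 1 = of_real (beta (real q) T)"
    using W2_parameters by metis
  have "T \<noteq> 0" using T(1) by simp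
  then have "w 2 1 + 1 / w 2 1 = of_real (sigma2 (real q))"
    unfolding w21 beta_add_inverse[OF q_ge4 \<open>T \<noteq> 0\<close> T(2), symmetric] by simp
  then have "w 2 1 ^ 2 + 1 / w 2 1 ^ 2 = of_real (dickson 2 (sigma2 (real q)))"
    using power2_add_inverse[OF weight_nonzero[of 2 1]] by simp
  then have "w 2 1 ^ 2 \<notin> weight_quotients (w 1 1) (w 1 2) (w 1 3)"
    by (rule W1_quotients_exclude) (use dickson2_sigma2_ne_dickson_sigma1[OF q_ge4] in blast)
  then show ?thesis
    using typeII_inequiv_by_cross_ratio[of 2 1] weight_square_mem_cross_ratios[of 1 2]
    by (simp add: typeII_inequiv_commute)
qed

lemma W1_W3_inequiv: "typeII_inequiv (q^2 - 1) (W 1) (W 3)"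
  using typeII_inequiv_by_nonreal[of 3 1 "w 3 1 ^ 2"] weight_square_mem_cross_ratios[of 1 3]
    W3_square_nonreal W1_real by (simp add: typeII_inequiv_commute)

lemma W1_W4_inequiv: "typeII_inequiv (q^2 - 1) (W 1) (W 4)"
  using typeII_inequiv_by_nonreal[of 4 1 "w 4 2 ^ 2"] weight_square_mem_cross_ratios[of 2 4]
    W4_square_nonreal W1_real by (simp add: typeII_inequiv_commute)

lemma W1_W5_inequiv: "typeII_inequiv (q^2 - 1) (W 1) (W 5)"
  using typeII_inequiv_by_nonreal[of 5 1 "w 5 1 ^ 2"] weight_square_mem_cross_ratios[of 1 5]
    W5_square_nonreal W1_real by (simp add: typeII_inequiv_commute)

lemma W2_W3_inequiv: "typeII_inequiv (q^2 - 1) (W 2) (W 3)"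
  using typeII_inequiv_by_nonreal[of 3 2 "w 3 1 ^ 2"] weight_square_mem_cross_ratios[of 1 3]
    W3_square_nonreal W2_real by (simp add: typeII_inequiv_commute)

lemma W2_W4_inequiv: "typeII_inequiv (q^2 - 1) (W 2) (W 4)"
  using typeII_inequiv_by_nonreal[of 4 2 "w 4 2 ^ 2"] weight_square_mem_cross_ratios[of 2 4]
    W4_square_nonreal W2_real by (simp add: typeII_inequiv_commute)

lemma W2_W5_inequiv: "typeII_inequiv (q^2 - 1) (W 2) (W 5)"
  using typeII_inequiv_by_nonreal[of 5 2 "w 5 1 ^ 2"] weight_square_mem_cross_ratios[of 1 5]
    W5_square_nonreal W2_real by (simp add: typeII_inequiv_commute)

lemma W3_W4_inequiv: "typeII_inequiv (q^2 - 1) (W 3) (W 4)"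
proof -
  have "w 3 1 ^ 2 + 1 / w 3 1 ^ 2 = of_real (dickson 2 (sigma3 (real q)))"
    by (rule power2_add_inverse[OF weight_nonzero[of 3 1] W3_weights(3)]) simp_all
  then have "w 3 1 ^ 2 \<notin> weight_quotients (w 4 1) (w 4 2) (w 4 3)"
    by (rule W4_quotients_exclude) (use dickson2_sigma3_ne_dickson_sigma4[OF q_ge4] in blast)
  then show ?thesis using typeII_inequiv_by_cross_ratio[of 3 4] weight_square_mem_cross_ratios[of 1 3] by simp
qed

lemma W3_W5_inequiv: "typeII_inequiv (q^2 - 1) (W 3) (W 5)"
proof -
  have "w 5 1 ^ 2 + 1 / w 5 1 ^ 2 = of_real (dickson 2 (sigma5 (real q)))"
    by (rule power2_add_inverse[OF weight_nonzero[of 5 1] W5_weights(3)]) simp_all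
  also have "dickson 2 (sigma5 (real q)) = sigma4 (real q)" using dickson2_sigma5 q_ge4 by simp
  finally have "w 5 1 ^ 2 \<notin> weight_quotients (w 3 1) (w 3 2) (w 3 3)"
    by (rule W3_quotients_exclude) (use sigma4_ne_signed_dickson_sigma3[OF q_ge4] in blast)
  then show ?thesis
    using typeII_inequiv_by_cross_ratio[of 5 3] weight_square_mem_cross_ratios[of 1 5]
    by (simp add: typeII_inequiv_commute)
qed

lemma W4_W5_inequiv: "typeII_inequiv (q^2 - 1) (W 4) (W 5)"
proof -
  have "1 / w 5 1 + 1 / (1 / w 5 1) = of_real (sigma5 (real q))"
    using W5_weights(3) by (simp add: add.commute)
  then have "1 / w 5 1 \<notin> weight_quotients (w 4 1) (w 4 2) (w 4 3)"
    by (rule W4_quotients_exclude) (use sigma5_ne_dickson_sigma4[OF q_ge4] in blast)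
  then show ?thesis
    using typeII_inequiv_by_cross_ratio[of 5 4]
      inverse_weight1_mem_cross_ratios[OF S F q4 weight_nonzero[of 5 1], of "w 5 2" "w 5 3"]
    by (simp add: typeII_inequiv_commute)
qed

lemma W6_square_add_inverse:
  "w 6 1 ^ 2 + 1 / w 6 1 ^ 2 = of_real (dickson 2 (sigma6 (real q) r))"
  using power2_add_inverse[OF weight_nonzero[of 6 1] W6_weights(2)] by simp

lemma W1_W6_inequiv: "typeII_inequiv (q^2 - 1) (W 1) (W 6)"
proof (cases "r > 0")
  case True
  then show ?thesis
    using typeII_inequiv_by_nonreal[of 6 1 "w 6 1 ^ 2"] weight_square_mem_cross_ratios[of 1 6]
      W6_square_nonreal W1_real by (simp add: typeII_inequiv_commute)
next
  case False
  then have "r < 0" using r_nonzero by simp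
  have "w 6 1 ^ 2 \<notin> weight_quotients (w 1 1) (w 1 2) (w 1 3)"
    by (rule W1_quotients_exclude[OF W6_square_add_inverse])
      (use dickson2_sigma6_neg_separated(1)[OF q_cases \<open>r < 0\<close> W6_weights(1)] in blast)
  then show ?thesis
    using typeII_inequiv_by_cross_ratio[of 6 1] weight_square_mem_cross_ratios[of 1 6]
    by (simp add: typeII_inequiv_commute)
qed

lemma W2_W6_inequiv: "typeII_inequiv (q^2 - 1) (W 2) (W 6)"
proof (cases "r > 0")
  case True
  then show ?thesis
    using typeII_inequiv_by_nonreal[of 6 2 "w 6 1 ^ 2"] weight_square_mem_cross_ratios[of 1 6]
      W6_square_nonreal W2_real by (simp add: typeII_inequiv_commute)
next
  case False
  then have "r < 0" using r_nonzero by simp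
  obtain T where T: "T > 0" "T + 1/T = real q ^ 2 - 3" and w2: "w 2 3 = of_real (-T)"
    "w 2 1 = of_real (beta (real q) T)" "w 2 2 = of_real (beta (real q) T)"
    by (rule W2_parameters)
  define b where "b = beta (real q) T"
  have sep: "(1 \<le> b \<and> 5 * b < T) \<or> (b \<le> 1 \<and> 5 * T < b)"
    unfolding b_def by (rule beta_separated[OF q_ge4 T])
  then have "b > 0" using T(1) by auto
  have "b + 1/b = sigma2 (real q)" unfolding b_def using beta_add_inverse[OF q_ge4 _ T(2)] T(1) by simp
  obtain \<alpha> where \<alpha>: "w 6 1 = of_real \<alpha>" using W6_real(1)[OF \<open>r < 0\<close>] by (auto elim: Reals_cases)
  then have "\<alpha> \<noteq> 0" using weight_nonzero[of 6 1] by auto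
  have "of_real (\<alpha>^2 + 1 / \<alpha>^2) = (of_real (dickson 2 (sigma6 (real q) r)) :: complex)"
    using W6_square_add_inverse unfolding \<alpha> by simp
  then have K: "\<alpha>^2 + 1 / \<alpha>^2 = dickson 2 (sigma6 (real q) r)" by (simp only: of_real_eq_iff)
  have "of_real (\<alpha>^2) \<notin> weight_quotients (w 2 1) (w 2 2) (w 2 3)"
  proof
    assume "of_real (\<alpha>^2) \<in> weight_quotients (w 2 1) (w 2 2) (w 2 3)"
    then have "\<alpha>^2 + 1/\<alpha>^2 = 2 \<or> \<alpha>^2 + 1/\<alpha>^2 = b + 1/b \<or> \<alpha>^2 + 1/\<alpha>^2 = dickson 2 (b + 1/b)
        \<or> 25 < \<alpha>^2 + 1/\<alpha>^2"
      using positive_weight_quotient_add_inverse[OF T(1) \<open>b > 0\<close> sep] \<open>\<alpha> \<noteq> 0\<close>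
      unfolding w2 b_def by simp
    then show False
      using dickson2_sigma6_neg_separated(2-5)[OF q_cases \<open>r < 0\<close> W6_weights(1)]
      unfolding K \<open>b + 1/b = sigma2 (real q)\<close> by auto
  qed
  then show ?thesis
    using typeII_inequiv_by_cross_ratio[of 6 2] weight_square_mem_cross_ratios[of 1 6]
    unfolding \<alpha> by (simp add: typeII_inequiv_commute)
qed

lemma W3_W6_inequiv: "typeII_inequiv (q^2 - 1) (W 3) (W 6)"
proof (cases "r > 0")
  case True
  have "w 6 1 ^ 2 \<notin> weight_quotients (w 3 1) (w 3 2) (w 3 3)"
    by (rule W3_quotients_exclude[OF W6_square_add_inverse])
      (use dickson2_sigma6_pos_separated(1)[OF q_cases True W6_weights(1)] in blast)
  then show ?thesis
    using typeII_inequiv_by_cross_ratio[of 6 3] weight_square_mem_cross_ratios[of 1 6]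
    by (simp add: typeII_inequiv_commute)
next
  case False
  then have "r < 0" using r_nonzero by simp
  then show ?thesis
    using typeII_inequiv_by_nonreal[of 3 6 "w 3 1 ^ 2"] weight_square_mem_cross_ratios[of 1 3]
      W3_square_nonreal W6_real by simp
qed

lemma W4_W6_inequiv: "typeII_inequiv (q^2 - 1) (W 4) (W 6)"
proof (cases "r > 0")
  case True
  have "w 6 1 ^ 2 \<notin> weight_quotients (w 4 1) (w 4 2) (w 4 3)"
    by (rule W4_quotients_exclude[OF W6_square_add_inverse])
      (use dickson2_sigma6_pos_separated(2)[OF q_cases True W6_weights(1)] in blast)
  then show ?thesis
    using typeII_inequiv_by_cross_ratio[of 6 4] weight_square_mem_cross_ratios[of 1 6]
    by (simp add: typeII_inequiv_commute)
next
  case False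
  then have "r < 0" using r_nonzero by simp
  then show ?thesis
    using typeII_inequiv_by_nonreal[of 4 6 "w 4 2 ^ 2"] weight_square_mem_cross_ratios[of 2 4]
      W4_square_nonreal W6_real by simp
qed

lemma W5_W6_inequiv: "typeII_inequiv (q^2 - 1) (W 5) (W 6)"
proof (cases "r > 0")
  case True
  have "w 6 1 ^ 2 \<notin> weight_quotients (w 5 1) (w 5 2) (w 5 3)"
    by (rule W5_quotients_exclude[OF W6_square_add_inverse])
      (use dickson2_sigma6_pos_separated(3)[OF q_cases True W6_weights(1)] in blast)
  then show ?thesis
    using typeII_inequiv_by_cross_ratio[of 6 5] weight_square_mem_cross_ratios[of 1 6]
    by (simp add: typeII_inequiv_commute)
next
  case False
  then have "r < 0" using r_nonzero by simp
  then show ?thesis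
    using typeII_inequiv_by_nonreal[of 5 6 "w 5 1 ^ 2"] weight_square_mem_cross_ratios[of 1 5]
      W5_square_nonreal W6_real by simp
qed

end

theorem proposition5p5:
  fixes q :: nat and A :: "nat \<Rightarrow> complex mat" and w :: "nat \<Rightarrow> nat \<Rightarrow> complex" and r :: real
  assumes "even q" and "q \<ge> 4"
    and "sym_assoc_scheme (q^2 - 1) 3 A"
    and "first_eigenmatrix (q^2 - 1) 3 A (P_q q)"
    and "\<forall>m\<in>{1..6}. \<forall>k\<in>{1,2,3}. w m k \<noteq> 0"
    and c1: "w 1 1 = w 1 2 \<and> w 1 2 = w 1 3 \<and> w 1 3 + 1 / w 1 3 + of_nat q ^ 2 - 3 = 0"
    and c2: "w 2 3 + 1 / w 2 3 + of_nat q ^ 2 - 3 = 0 \<and>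
             w 2 1 = (-(of_nat q - 3) * w 2 3 + (of_nat q - 1)) / (of_nat q ^ 2 - 2 * of_nat q - 1) \<and>
             w 2 2 = w 2 1"
    and c3: "w 3 1 + 1 / w 3 1 = 2 * (of_nat q ^ 2 - 6) / (of_nat q ^ 2 - 4) \<and> w 3 2 = -1 \<and> w 3 3 = w 3 1"
    and c4: "w 4 1 = 1 \<and> w 4 3 = 1 \<and> w 4 2 + 1 / w 4 2 = -2 * (of_nat q ^ 2 - 2) / of_nat q ^ 2"
    and c5: "w 5 1 + 1 / w 5 1 = -2 / of_nat q \<and> w 5 2 = 1 / w 5 1 \<and> w 5 3 = 1"
    and c6: "r^2 = (17 * real q - 1) * (real q - 1) \<and>
             w 6 1 + 1 / w 6 1 = a01 q r \<and>
             w 6 2 = (w 6 1 ^ 2 - 1) / (a12 q r * w 6 1 - a02 q r) \<and>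
             w 6 3 = (w 6 1 ^ 2 - 1) / (a13 q r * w 6 1 - a03 q r)"
  shows "\<forall>m\<in>{1..6::nat}. \<forall>m'\<in>{1..6::nat}. m \<noteq> m' \<longrightarrow>
           \<not> typeII_equiv (q^2 - 1) (W_of (q^2 - 1) A (w m 1) (w m 2) (w m 3))
                                    (W_of (q^2 - 1) A (w m' 1) (w m' 2) (w m' 3))"
proof -
  interpret six_type_II_matrices q A w r
    by unfold_locales (fact assms)+
  have pairs: "typeII_inequiv (q^2 - 1) (W m) (W m')" if "m < m'" "m \<in> {1..6}" "m' \<in> {1..6}" for m m'
  proof -
    have "m \<in> {1,2,3,4,5}" "m' \<in> {2,3,4,5,6}" using that by auto
    then show ?thesis
      using \<open>m < m'\<close> W1_W2_inequiv W1_W3_inequiv W1_W4_inequiv W1_W5_inequiv W1_W6_inequiv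
        W2_W3_inequiv W2_W4_inequiv W2_W5_inequiv W2_W6_inequiv
        W3_W4_inequiv W3_W5_inequiv W3_W6_inequiv W4_W5_inequiv W4_W6_inequiv W5_W6_inequiv
      by fastforce
  qed
  show ?thesis
  proof (intro ballI impI)
    fix m m' :: nat assume "m \<in> {1..6}" "m' \<in> {1..6}" "m \<noteq> m'"
    then have "typeII_inequiv (q^2 - 1) (W m) (W m')"
      using pairs[of m m'] pairs[of m' m] typeII_inequiv_commute by (cases "m < m'") auto
    then show "\<not> typeII_equiv (q^2 - 1) (W m) (W m')" unfolding typeII_inequiv_def by simp
  qed
qed

end
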